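(* Let $m,n,r\ge 1$, $n_A\ge 1$, $\mu,\nu>0$, and let the data $M=[M_1\ \cdots\ M_{n_A}]\in\mathbb{R}^{m\times n}$, $\Omega_l$, $\mathcal{N}(l)$, $E_{lk}$, $f_l$ be as described in the context, with the area adjacency graph connected. Let $(\{\overline U_l\},\{\overline V_l\},\{\overline S_{lj}\},\{\overline q_{lj}\})$ be a stationary point of the decentralized problem $(\mathrm{P})$ defined in the context. Then $\overline U:=\overline U_1=\cdots=\overline U_{n_A}$, and with $\overline V:=[\overline V_1\ \cdots\ \overline V_{n_A}]\in\mathbb{R}^{r\times n}$ and $\overline X:=\overline U\,\overline V$, if $$\big\|\mu\,\mathcal{B}^*\big(\mathcal{B}(\overline X)-d\big)\big\|_2\le 1,$$ then $\overline X$ is a global minimizer of $$\min_{X\in\mathbb{R}^{m\times n}}\ \|X\|_*+\frac{\mu}{2}\|\mathcal{B}(X)-d\|_2^2 .$$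
   Context: Data: a matrix $M\in\mathbb{R}^{m\times n}$ whose column index set $\{1,\dots,n\}$ is partitioned into $n_A$ areas $A^1,\dots,A^{n_A}$ with $|A^l|=n_l$; write $M=[M_1\ \cdots\ M_{n_A}]$ with $M_l\in\mathbb{R}^{m\times n_l}$ the columns of area $l$, and similarly $X=[X_1\ \cdots\ X_{n_A}]$ for any $X\in\mathbb{R}^{m\times n}$. For each $l$, $\Omega_l$ is a set of observed entry positions of $M_l$, and $P_{\Omega_l}$ is the operator keeping entries in $\Omega_l$ and setting others to $0$; $\Omega=\bigcup_l\Omega_l$ (viewed as positions in $M$), with elements $(i_1,j_1),\dots,(i_{|\Omega|},j_{|\Omega|})$. $\mathcal{N}(l)\subseteq\{1,\dots,n_A\}\setminus\{l\}$ is the set of areas adjacent to area $l$ (symmetric relation); the graph on areas with these adjacencies is assumed connected. For each $l$ and each $k\in\{l\}\cup\mathcal{N}(l)$, $E_{lk}:\mathbb{R}^{m\times n_k}\to\mathbb{C}^{p_l}$ is a (real-)linear map acting on the columns of area $k$, and $f_l\in\mathbb{C}^{p_l}$. Decentralized problem $(\mathrm{P})$: minimize over $U_l\in\mathbb{R}^{m\times r}$, $V_l\in\mathbb{R}^{r\times n_l}$ ($l=1,\dots,n_A$), auxiliary $S_{lj}$ and $q_{lj}$ ($j\in\mathcal{N}(l)$) the function $$\sum_{l=1}^{n_A}\Big[\tfrac12\big(\tfrac1{n_A}\|U_l\|_F^2+\|V_l\|_F^2\big)+\tfrac{\mu}{2}\|P_{\Omega_l}(U_lV_l-M_l)\|_F^2+\tfrac{\nu}{2}\big\|E_{ll}(U_lV_l)+\textstyle\sum_{j\in\mathcal{N}(l)}q_{lj}-f_l\big\|_2^2\Big]$$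 subject to $U_l=S_{lj}=U_j$ and $E_{lj}(U_jV_j)=q_{lj}$ for all $l$ and all $j\in\mathcal{N}(l)$. A stationary point means a point satisfying the first-order (KKT) optimality conditions of this equality-constrained problem. The map $\mathcal{B}$ and vector $d$: $\mathcal{B}(X)=\big(X_{i_1j_1},\dots,X_{i_{|\Omega|}j_{|\Omega|}},\ \sqrt{\nu/\mu}\,(E_{11}(X_1)+\sum_{j\in\mathcal{N}(1)}E_{1j}(X_j)),\dots,\sqrt{\nu/\mu}\,(E_{n_An_A}(X_{n_A})+\sum_{j\in\mathcal{N}(n_A)}E_{n_Aj}(X_j))\big)$ and $d=\big(M_{i_1j_1},\dots,M_{i_{|\Omega|}j_{|\Omega|}},\sqrt{\nu/\mu}\,f_1,\dots,\sqrt{\nu/\mu}\,f_{n_A}\big)$. Complex coordinates are identified with pairs of real coordinates, so $\mathcal{B}$ is a real linear map into some $\mathbb{R}^L$; $\mathcal{B}^*$ is its adjoint with respect to the Frobenius inner product $\langle B,X\rangle_F=\mathrm{tr}(B^{\intercal}X)$ and the Euclidean inner product (i.e. if $[\mathcal{B}(X)]_i=\langle B_i,X\rangle_F$ then $\mathcal{B}^*(z)=\sum_i z_iB_i$). $\|\cdot\|_*$ is the nuclear norm and $\|\cdot\|_2$ applied to a matrix is the spectral norm. *)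

theory Defs
  imports Complex_Main
begin

text \<open>Matrices are functions nat => nat => real; only entries with
row index < m and column index < n (resp. the stated bounds) are meaningful.
Areas, rows, columns and rank indices are numbered from 0.
The column partition is given by an area-assignment ar: column b < n lies in area ar b.\<close>

definition area :: "(nat \<Rightarrow> nat) \<Rightarrow> nat \<Rightarrow> nat \<Rightarrow> nat set" where
  "area ar n l = {b. b < n \<and> ar b = l}"

definition is_csvd :: "nat \<Rightarrow> nat \<Rightarrow> (nat \<Rightarrow> nat \<Rightarrow> real) \<Rightarrow> nat \<Rightarrow> (nat \<Rightarrow> real)
    \<Rightarrow> (nat \<Rightarrow> nat \<Rightarrow> real) \<Rightarrow> (nat \<Rightarrow> nat \<Rightarrow> real) \<Rightarrow> bool" where
  "is_csvd m n X k \<sigma> u v \<longleftrightarrow>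
     (\<forall>i<k. \<sigma> i > 0) \<and>
     (\<forall>i<k. \<forall>j<k. (\<Sum>a<m. u i a * u j a) = (if i = j then 1 else 0)) \<and>
     (\<forall>i<k. \<forall>j<k. (\<Sum>b<n. v i b * v j b) = (if i = j then 1 else 0)) \<and>
     (\<forall>a<m. \<forall>b<n. X a b = (\<Sum>i<k. \<sigma> i * u i a * v i b))"

definition nuclear_norm :: "nat \<Rightarrow> nat \<Rightarrow> (nat \<Rightarrow> nat \<Rightarrow> real) \<Rightarrow> real" where
  "nuclear_norm m n X =
     (SOME s. \<exists>k \<sigma> u v. is_csvd m n X k \<sigma> u v \<and> s = (\<Sum>i<k. \<sigma> i))"

definition spectral_norm :: "nat \<Rightarrow> nat \<Rightarrow> (nat \<Rightarrow> nat \<Rightarrow> real) \<Rightarrow> real" where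
  "spectral_norm m n X =
     (SOME s. \<exists>k \<sigma> u v. is_csvd m n X k \<sigma> u v \<and> s = Max (insert 0 (\<sigma> ` {..<k})))"

text \<open>The real-linear map E_lk : R^(m x n_k) -> C^(p_l), acting on the columns of area k,
given by its coefficient array Ec l k i a b (component i, entry (a,b) with b in area k).\<close>
definition Eapp :: "(nat \<Rightarrow> nat \<Rightarrow> nat \<Rightarrow> nat \<Rightarrow> nat \<Rightarrow> complex) \<Rightarrow> nat \<Rightarrow> (nat \<Rightarrow> nat) \<Rightarrow> nat
    \<Rightarrow> nat \<Rightarrow> nat \<Rightarrow> (nat \<Rightarrow> nat \<Rightarrow> real) \<Rightarrow> nat \<Rightarrow> complex" where
  "Eapp Ec m ar n l k X i = (\<Sum>a<m. \<Sum>b\<in>area ar n k. Ec l k i a b * complex_of_real (X a b))"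

text \<open>Product U_l V_l (columns indexed by the global column indices of area l).\<close>
definition prodUV :: "nat \<Rightarrow> (nat \<Rightarrow> nat \<Rightarrow> nat \<Rightarrow> real) \<Rightarrow> (nat \<Rightarrow> nat \<Rightarrow> nat \<Rightarrow> real)
    \<Rightarrow> nat \<Rightarrow> nat \<Rightarrow> nat \<Rightarrow> real" where
  "prodUV r U V l = (\<lambda>a b. \<Sum>k<r. U l a k * V l k b)"

definition Pobj where
  "Pobj m n r nA ar \<Omega> N Ec p f \<mu> \<nu> M U V q =
    (\<Sum>l<nA.
       (1/2) * ((1 / real nA) * (\<Sum>a<m. \<Sum>k<r. (U l a k)\<^sup>2)
                + (\<Sum>k<r. \<Sum>b\<in>area ar n l. (V l k b)\<^sup>2))
     + \<mu>/2 * (\<Sum>(a,b)\<in>\<Omega> l. (prodUV r U V l a b - M a b)\<^sup>2)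
     + \<nu>/2 * (\<Sum>i<p l. (cmod (Eapp Ec m ar n l l (prodUV r U V l) i
                               + (\<Sum>j\<in>N l. q l j i) - f l i))\<^sup>2))"

definition Pfeasible where
  "Pfeasible m n r nA ar N Ec p U V S q \<longleftrightarrow>
    (\<forall>l<nA. \<forall>j\<in>N l.
       (\<forall>a<m. \<forall>k<r. U l a k = S l j a k \<and> S l j a k = U j a k) \<and>
       (\<forall>i<p l. Eapp Ec m ar n l j (prodUV r U V j) i = q l j i))"

text \<open>Lagrangian of (P) with multipliers Lam (for U_l = S_lj), Gam (for S_lj = U_j)
and Pi (for E_lj(U_j V_j) = q_lj; complex, paired via the real inner product Re (conj x * y)).\<close>
definition Plag where
  "Plag m n r nA ar \<Omega> N Ec p f \<mu> \<nu> M U V S q Lam Gam Pi =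
    Pobj m n r nA ar \<Omega> N Ec p f \<mu> \<nu> M U V q
    + (\<Sum>l<nA. \<Sum>j\<in>N l.
         (\<Sum>a<m. \<Sum>k<r. Lam l j a k * (U l a k - S l j a k))
       + (\<Sum>a<m. \<Sum>k<r. Gam l j a k * (S l j a k - U j a k))
       + (\<Sum>i<p l. Re (cnj (Pi l j i) * (Eapp Ec m ar n l j (prodUV r U V j) i - q l j i))))"

text \<open>Stationary (KKT) point: feasible, and for some multipliers the gradient of the
Lagrangian in the primal variables vanishes, i.e. every directional derivative is 0.\<close>
definition Pstationary where
  "Pstationary m n r nA ar \<Omega> N Ec p f \<mu> \<nu> M U V S q \<longleftrightarrow>
    Pfeasible m n r nA ar N Ec p U V S q \<and>
    (\<exists>Lam Gam Pi. \<forall>dU dV dS dq.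
       ((\<lambda>t. Plag m n r nA ar \<Omega> N Ec p f \<mu> \<nu> M
              (\<lambda>l a k. U l a k + t * dU l a k)
              (\<lambda>l k b. V l k b + t * dV l k b)
              (\<lambda>l j a k. S l j a k + t * dS l j a k)
              (\<lambda>l j i. q l j i + complex_of_real t * dq l j i)
              Lam Gam Pi) has_real_derivative 0) (at 0))"

definition area_graph_connected :: "nat \<Rightarrow> (nat \<Rightarrow> nat set) \<Rightarrow> bool" where
  "area_graph_connected nA N \<longleftrightarrow>
    (\<forall>l<nA. \<forall>l'<nA. (l, l') \<in> {(x, y). x < nA \<and> y \<in> N x}\<^sup>*)"

text \<open>The map B: components indexed by Inl (a,b) for (a,b) in Omega, and by
Inr (l,i,True/False) for real/imaginary part of component i of the l-th block.\<close>
definition Bidx :: "nat \<Rightarrow> (nat \<Rightarrow> (nat \<times> nat) set) \<Rightarrow> (nat \<Rightarrow> nat)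
    \<Rightarrow> ((nat \<times> nat) + (nat \<times> nat \<times> bool)) set" where
  "Bidx nA \<Omega> p = Inl ` (\<Union>l<nA. \<Omega> l) \<union> Inr ` {(l, i, t). l < nA \<and> i < p l}"

definition Bmap where
  "Bmap m n ar N Ec \<mu> \<nu> X c =
    (case c of Inl (a, b) \<Rightarrow> X a b
     | Inr (l, i, t) \<Rightarrow>
        (let z = Eapp Ec m ar n l l X i + (\<Sum>j\<in>N l. Eapp Ec m ar n l j X i)
         in sqrt (\<nu>/\<mu>) * (if t then Re z else Im z)))"

definition dvec where
  "dvec \<mu> \<nu> M f c =
    (case c of Inl (a, b) \<Rightarrow> M a b
     | Inr (l, i, t) \<Rightarrow> sqrt (\<nu>/\<mu>) * (if t then Re (f l i) else Im (f l i)))"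

text \<open>Adjoint B^*(z) = sum_c z_c B_c, where (B_c)_{ab} = [B(e_ab)]_c.\<close>
definition Badj where
  "Badj m n nA ar \<Omega> N Ec p \<mu> \<nu> z =
    (\<lambda>a b. if a < m \<and> b < n then
       (\<Sum>c\<in>Bidx nA \<Omega> p. z c * Bmap m n ar N Ec \<mu> \<nu> (\<lambda>a' b'. if a' = a \<and> b' = b then 1 else 0) c)
     else 0)"

definition NNobj where
  "NNobj m n nA ar \<Omega> N Ec p f \<mu> \<nu> M X =
    nuclear_norm m n X
    + \<mu>/2 * (\<Sum>c\<in>Bidx nA \<Omega> p. (Bmap m n ar N Ec \<mu> \<nu> X c - dvec \<mu> \<nu> M f c)\<^sup>2)"

end

(* At a stationary point the consensus constraints, propagated along the connected area graph,
   make all local copies U_l equal to one U. Perturbing all copies of U by a common W, every V_l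
   by D, and the auxiliary variables consistently, all multiplier terms drop out and stationarity
   reduces to that of (U, V) |-> (||U||_F^2 + ||V||_F^2)/2 + <G, U V>, where
   G = mu B^*(B(X) - d) is the gradient of the data-fit term at X = U V. Hence V = -U^T G and
   U = -G V^T, so <G, X> = -||U||_F^2 = -||V||_F^2 and
   ||X||_* <= (||U||_F^2 + ||V||_F^2)/2 = -<G, X>.
   If ||G||_2 <= 1, trace duality gives ||Y||_* >= -<G, Y> for all Y, so -G is a subgradient of
   the nuclear norm at X and X minimizes the convex objective. Singular value decompositions are
   built by deflation, starting from a maximizer of u^T X v over pairs of unit vectors. *)

theory Submission
  imports Defs "HOL-Analysis.Analysis"
begin

section \<open>Orthonormal families and singular value decompositions\<close>

definition vdot :: "nat \<Rightarrow> (nat \<Rightarrow> real) \<Rightarrow> (nat \<Rightarrow> real) \<Rightarrow> real" where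
  "vdot n x y = (\<Sum>a<n. x a * y a)"

definition orthonormal_family :: "nat \<Rightarrow> nat \<Rightarrow> (nat \<Rightarrow> nat \<Rightarrow> real) \<Rightarrow> bool" where
  "orthonormal_family n k e \<longleftrightarrow> (\<forall>i<k. \<forall>j<k. vdot n (e i) (e j) = (if i = j then 1 else 0))"

lemma vdot_commute: "vdot n x y = vdot n y x"
  by (simp add: vdot_def mult.commute)

lemma vdot_self_nonneg: "0 \<le> vdot n x x"
  by (simp add: vdot_def sum_nonneg)

lemma sq_le_vdot_self: "a < n \<Longrightarrow> (x a)\<^sup>2 \<le> vdot n x x"
  using sum_mono2[of "{..<n}" "{a}" "\<lambda>b. (x b)\<^sup>2"] by (simp add: vdot_def power2_eq_square)

lemma vdot_sum_right: "vdot n x (\<lambda>a. \<Sum>i<k. c i * e i a) = (\<Sum>i<k. c i * vdot n x (e i))"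
  unfolding vdot_def sum_distrib_left
  by (subst sum.swap) (simp add: sum_distrib_left mult_ac)

lemma orthonormal_family_coeff:
  assumes "orthonormal_family n k e" "l < k"
  shows "vdot n (e l) (\<lambda>a. \<Sum>i<k. c i * e i a) = c l"
proof -
  have "vdot n (e l) (\<lambda>a. \<Sum>i<k. c i * e i a) = (\<Sum>i<k. if i = l then c i else 0)"
    unfolding vdot_sum_right using assms unfolding orthonormal_family_def by (intro sum.cong) auto
  then show ?thesis using assms(2) by simp
qed

lemma bessel_inequality:
  assumes "orthonormal_family n k e"
  shows "(\<Sum>i<k. (vdot n x (e i))\<^sup>2) \<le> vdot n x x"
proof -
  define c where "c i = vdot n x (e i)" for i
  define s where "s = (\<lambda>a. \<Sum>i<k. c i * e i a)"
  have "vdot n s s = (\<Sum>i<k. c i * vdot n s (e i))"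
    by (subst (2) s_def) (simp add: vdot_sum_right)
  also have "\<dots> = (\<Sum>i<k. c i * c i)"
    using orthonormal_family_coeff[OF assms] unfolding s_def by (intro sum.cong) (auto simp: vdot_commute)
  finally have ss: "vdot n s s = (\<Sum>i<k. c i * c i)" .
  have xs: "vdot n x s = (\<Sum>i<k. c i * c i)"
    unfolding s_def vdot_sum_right c_def by simp
  have "0 \<le> (\<Sum>a<n. (x a - s a)\<^sup>2)" by (simp add: sum_nonneg)
  also have "(\<Sum>a<n. (x a - s a)\<^sup>2) = vdot n x x - 2 * vdot n x s + vdot n s s"
    by (simp add: vdot_def power2_eq_square algebra_simps sum.distrib sum_subtractf sum_distrib_left)
  finally show ?thesis using ss xs by (simp add: c_def power2_eq_square)
qed

lemma orthonormal_family_le_dim: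
  assumes "orthonormal_family n k e"
  shows "k \<le> n"
proof -
  define d where "d a = (\<lambda>b. if b = a then 1 else (0::real))" for a :: nat
  have d_vdot: "vdot n (d a) y = y a" if "a < n" for a y
  proof -
    have "vdot n (d a) y = (\<Sum>b<n. if b = a then y b else 0)"
      unfolding vdot_def d_def by (intro sum.cong) auto
    then show ?thesis using that by simp
  qed
  have "real k = (\<Sum>i<k. \<Sum>a<n. (e i a)\<^sup>2)"
    using assms unfolding orthonormal_family_def vdot_def by (simp add: power2_eq_square)
  also have "\<dots> = (\<Sum>a<n. \<Sum>i<k. (vdot n (d a) (e i))\<^sup>2)"
    by (subst sum.swap) (simp add: d_vdot)
  also have "\<dots> \<le> (\<Sum>a<n. vdot n (d a) (d a))"
    by (intro sum_mono bessel_inequality[OF assms])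
  also have "\<dots> = real n"
    by (simp add: d_vdot) (simp add: d_def)
  finally show ?thesis by simp
qed

lemma orthonormal_family_extend:
  assumes "orthonormal_family n k e" "vdot n v v = 1" "\<forall>i<k. vdot n (e i) v = 0"
  shows "orthonormal_family n (Suc k) (e(k := v))"
  unfolding orthonormal_family_def
proof (intro allI impI)
  fix i j assume "i < Suc k" "j < Suc k"
  then show "vdot n ((e(k := v)) i) ((e(k := v)) j) = (if i = j then 1 else 0)"
    using assms unfolding orthonormal_family_def
    by (cases "i = k"; cases "j = k") (auto simp: vdot_commute less_Suc_eq)
qed

text \<open>Vectors are required to vanish off \<open>{..<n}\<close> and the redundant box constraint is
  imposed, so that compactness of the sphere in the product topology follows from Tychonoff.\<close>
definition unit_sphere_on :: "nat \<Rightarrow> (nat \<Rightarrow> real) set" where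
  "unit_sphere_on n = (PiE UNIV (\<lambda>a. if a < n then {-1..1} else {0})) \<inter> {x. vdot n x x = 1}"

lemma compact_unit_sphere_on: "compact (unit_sphere_on n)"
proof -
  have "compactin (product_topology (\<lambda>i. euclidean) UNIV) (PiE UNIV (\<lambda>a. if a < n then {-1..1::real} else {0}))"
    by (subst compactin_PiE) (auto simp: compactin_euclidean_iff)
  then have "compact (PiE UNIV (\<lambda>a. if a < n then {-1..1::real} else {0}))"
    by (simp add: euclidean_product_topology compactin_euclidean_iff)
  moreover have "closed {x. vdot n x x = 1}"
    unfolding vdot_def
    by (intro closed_Collect_eq continuous_intros continuous_on_product_then_coordinatewise)
  ultimately show ?thesis
    unfolding unit_sphere_on_def by (rule compact_Int_closed)
qed

lemma unit_sphere_maximizer_aligned: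
  assumes unit: "vdot n v v = 1" and max: "\<forall>v'\<in>unit_sphere_on n. vdot n w v' \<le> vdot n w v"
    and pos: "0 < vdot n w v"
  shows "\<forall>b<n. w b = vdot n w v * v b"
proof -
  define \<sigma> where "\<sigma> = vdot n w v"
  define s where "s = sqrt (vdot n w w)"
  have "vdot n w w \<noteq> 0"
  proof
    assume "vdot n w w = 0"
    then have "\<forall>b<n. w b = 0" using sq_le_vdot_self[of _ n w] by fastforce
    then show False using pos by (simp add: vdot_def)
  qed
  then have s_pos: "s > 0" and ss: "s * s = vdot n w w"
    using vdot_self_nonneg[of n w] by (auto simp: s_def)
  define v' where "v' = (\<lambda>b. if b < n then w b / s else 0)"
  have "\<bar>w b\<bar> \<le> s" if "b < n" for b
    using sq_le_vdot_self[OF that, of w] unfolding s_def by (simp add: real_le_rsqrt)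
  then have "-s \<le> w b \<and> w b \<le> s" if "b < n" for b
    using that by (metis abs_le_iff minus_le_iff)
  then have "v' \<in> unit_sphere_on n"
    using s_pos ss \<open>vdot n w w \<noteq> 0\<close>
    by (auto simp: unit_sphere_on_def v'_def vdot_def sum_divide_distrib[symmetric]
        divide_le_eq le_divide_eq PiE_def extensional_def)
  moreover have "vdot n w v' = vdot n w w / s"
    unfolding vdot_def v'_def by (simp add: sum_divide_distrib)
  ultimately have "vdot n w w / s \<le> \<sigma>"
    using max unfolding \<sigma>_def by metis
  then have "s * s \<le> \<sigma> * s" using s_pos ss by (simp add: divide_le_eq)
  then have "s \<le> \<sigma>" using s_pos by (rule mult_right_le_imp_le)
  have "(\<Sum>b<n. (w b - \<sigma> * v b)\<^sup>2) = vdot n w w - 2 * \<sigma> * vdot n w v + \<sigma> * \<sigma> * vdot n v v"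
    by (simp add: vdot_def power2_eq_square algebra_simps sum.distrib sum_subtractf sum_distrib_left)
  also have "\<dots> = s * s - \<sigma> * \<sigma>" using unit ss \<sigma>_def by simp
  also have "\<dots> \<le> 0" using \<open>s \<le> \<sigma>\<close> s_pos by (simp add: mult_mono)
  finally have "(\<Sum>b<n. (w b - \<sigma> * v b)\<^sup>2) = 0"
    by (simp add: order_antisym sum_nonneg)
  then show ?thesis
    by (subst (asm) sum_nonneg_eq_0_iff) (auto simp: \<sigma>_def)
qed

lemma coordinate_vector_in_unit_sphere:
  assumes "a0 < n" "\<bar>c\<bar> = 1"
  shows "(\<lambda>a. if a = a0 then c else 0) \<in> unit_sphere_on n"
proof -
  have "vdot n (\<lambda>a. if a = a0 then c else 0) (\<lambda>a. if a = a0 then c else 0) = (\<Sum>a<n. if a = a0 then c * c else 0)"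
    unfolding vdot_def by (intro sum.cong) auto
  also have "\<dots> = 1" using assms abs_mult_self_eq[of c] by simp
  finally show ?thesis
    using assms by (auto simp: unit_sphere_on_def PiE_def extensional_def abs_le_iff)
qed

lemma bilinear_pos_on_unit_spheres:
  assumes "a0 < m" "b0 < n" "X a0 b0 \<noteq> 0"
  shows "\<exists>u\<in>unit_sphere_on m. \<exists>v\<in>unit_sphere_on n. 0 < (\<Sum>a<m. \<Sum>b<n. u a * X a b * v b)"
proof -
  define u where "u = (\<lambda>a. if a = a0 then sgn (X a0 b0) else 0)"
  define v where "v = (\<lambda>b. if b = b0 then 1 else (0::real))"
  have "(\<Sum>b<n. u a * X a b * v b) = (if a = a0 then sgn (X a0 b0) * X a0 b0 else 0)" for a
  proof -
    have "(\<Sum>b<n. u a * X a b * v b) = (\<Sum>b<n. if b = b0 then u a * X a b0 else 0)"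
      by (intro sum.cong) (auto simp: v_def)
    then show ?thesis using assms by (simp add: u_def)
  qed
  then have "(\<Sum>a<m. \<Sum>b<n. u a * X a b * v b) = \<bar>X a0 b0\<bar>"
    using assms by (simp add: sgn_mult_self_eq abs_if sgn_if)
  moreover have "u \<in> unit_sphere_on m" "v \<in> unit_sphere_on n"
    unfolding u_def v_def using assms by (auto intro!: coordinate_vector_in_unit_sphere simp: abs_sgn)
  ultimately show ?thesis using assms(3) by force
qed

lemma top_singular_pair:
  assumes "a0 < m" "b0 < n" "X a0 b0 \<noteq> 0"
  obtains \<sigma> u v where "\<sigma> > 0" "vdot m u u = 1" "vdot n v v = 1"
    "\<forall>a<m. (\<Sum>b<n. X a b * v b) = \<sigma> * u a" "\<forall>b<n. (\<Sum>a<m. u a * X a b) = \<sigma> * v b"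
proof -
  define F where "F p = (\<Sum>a<m. \<Sum>b<n. fst p a * X a b * snd p b)" for p :: "(nat\<Rightarrow>real)\<times>(nat\<Rightarrow>real)"
  define K where "K = unit_sphere_on m \<times> unit_sphere_on n"
  obtain p0 where "p0 \<in> K" "F p0 > 0"
    using bilinear_pos_on_unit_spheres[of a0 m b0 n X] assms unfolding K_def F_def by fastforce
  have "compact K" unfolding K_def by (intro compact_Times compact_unit_sphere_on)
  moreover have "continuous_on K F"
    unfolding F_def by (intro continuous_intros continuous_on_product_then_coordinatewise)
  ultimately obtain p where "p \<in> K" and p_max: "\<forall>y\<in>K. F y \<le> F p"
    using continuous_attains_sup \<open>p0 \<in> K\<close> by blast
  define u where "u = fst p"
  define v where "v = snd p"
  have u: "u \<in> unit_sphere_on m" and v: "v \<in> unit_sphere_on n"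
    using \<open>p \<in> K\<close> by (auto simp: K_def u_def v_def)
  define Xtu where "Xtu b = (\<Sum>a<m. u a * X a b)" for b
  define Xv where "Xv a = (\<Sum>b<n. X a b * v b)" for a
  have F_u: "F (u, v') = vdot n Xtu v'" for v'
    unfolding F_def Xtu_def vdot_def by (simp add: sum_distrib_right sum.swap[of _ "{..<m}"])
  have F_v: "F (u', v) = vdot m Xv u'" for u'
    unfolding F_def Xv_def vdot_def by (simp add: sum_distrib_left mult_ac)
  have p_eq: "p = (u, v)" by (simp add: u_def v_def)
  have F_pos: "F p > 0" using \<open>F p0 > 0\<close> p_max \<open>p0 \<in> K\<close> by fastforce
  have "\<forall>b<n. Xtu b = vdot n Xtu v * v b"
  proof (rule unit_sphere_maximizer_aligned)
    show "\<forall>v'\<in>unit_sphere_on n. vdot n Xtu v' \<le> vdot n Xtu v"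
      using p_max u unfolding K_def p_eq by (metis F_u SigmaI)
  qed (use v F_pos in \<open>auto simp: unit_sphere_on_def p_eq F_u\<close>)
  moreover have "\<forall>a<m. Xv a = vdot m Xv u * u a"
  proof (rule unit_sphere_maximizer_aligned)
    show "\<forall>u'\<in>unit_sphere_on m. vdot m Xv u' \<le> vdot m Xv u"
      using p_max v unfolding K_def p_eq by (metis F_v SigmaI)
  qed (use u F_pos in \<open>auto simp: unit_sphere_on_def p_eq F_v\<close>)
  ultimately show ?thesis
    using that[of "F p" u v] F_pos u v F_u[of v] F_v[of u]
    unfolding p_eq Xtu_def Xv_def unit_sphere_on_def by auto
qed

lemma is_csvd_iff:
  "is_csvd m n X k \<sigma> u v \<longleftrightarrow> (\<forall>i<k. \<sigma> i > 0) \<and> orthonormal_family m k u \<and> orthonormal_family n k v \<and>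
     (\<forall>a<m. \<forall>b<n. X a b = (\<Sum>i<k. \<sigma> i * u i a * v i b))"
  unfolding is_csvd_def orthonormal_family_def vdot_def by simp

lemma csvd_mult_vec:
  assumes "\<forall>a<m. \<forall>b<n. X a b = (\<Sum>i<k. \<sigma> i * u i a * v i b)" "a < m"
  shows "(\<Sum>b<n. X a b * w b) = (\<Sum>i<k. \<sigma> i * u i a * vdot n (v i) w)"
proof -
  have "(\<Sum>b<n. X a b * w b) = (\<Sum>b<n. \<Sum>i<k. \<sigma> i * u i a * (v i b * w b))"
    using assms by (intro sum.cong) (auto simp: sum_distrib_left sum_distrib_right mult_ac)
  also have "\<dots> = (\<Sum>i<k. \<sigma> i * u i a * vdot n (v i) w)"
    by (subst sum.swap) (simp add: vdot_def sum_distrib_left)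
  finally show ?thesis .
qed

lemma csvd_vec_mult:
  assumes "\<forall>a<m. \<forall>b<n. X a b = (\<Sum>i<k. \<sigma> i * u i a * v i b)" "b < n"
  shows "(\<Sum>a<m. w a * X a b) = (\<Sum>i<k. \<sigma> i * vdot m w (u i) * v i b)"
proof -
  have "(\<Sum>a<m. w a * X a b) = (\<Sum>a<m. \<Sum>i<k. \<sigma> i * v i b * (w a * u i a))"
    using assms by (intro sum.cong) (auto simp: sum_distrib_left mult_ac)
  also have "\<dots> = (\<Sum>i<k. \<sigma> i * vdot m w (u i) * v i b)"
    by (subst sum.swap) (simp add: vdot_def sum_distrib_left mult_ac)
  finally show ?thesis .
qed

lemma csvd_right_factor_orthogonal:
  assumes "is_csvd m n X k \<sigma> u v" "\<forall>a<m. (\<Sum>b<n. X a b * w b) = 0" "l < k"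
  shows "vdot n (v l) w = 0"
proof -
  have \<sigma>: "\<forall>i<k. \<sigma> i > 0" and u: "orthonormal_family m k u"
    and X: "\<forall>a<m. \<forall>b<n. X a b = (\<Sum>i<k. \<sigma> i * u i a * v i b)"
    using assms(1) unfolding is_csvd_iff by auto
  have "vdot m (u l) (\<lambda>a. \<Sum>i<k. (\<sigma> i * vdot n (v i) w) * u i a) = 0"
    using csvd_mult_vec[OF X] assms(2) by (simp add: vdot_def mult_ac)
  then have "\<sigma> l * vdot n (v l) w = 0" using orthonormal_family_coeff[OF u assms(3)] by simp
  then show ?thesis using \<sigma> assms(3) by fastforce
qed

lemma csvd_left_factor_orthogonal:
  assumes "is_csvd m n X k \<sigma> u v" "\<forall>b<n. (\<Sum>a<m. w a * X a b) = 0" "l < k"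
  shows "vdot m (u l) w = 0"
proof -
  have \<sigma>: "\<forall>i<k. \<sigma> i > 0" and v: "orthonormal_family n k v"
    and X: "\<forall>a<m. \<forall>b<n. X a b = (\<Sum>i<k. \<sigma> i * u i a * v i b)"
    using assms(1) unfolding is_csvd_iff by auto
  have "vdot n (v l) (\<lambda>b. \<Sum>i<k. (\<sigma> i * vdot m w (u i)) * v i b) = 0"
    using csvd_vec_mult[OF X] assms(2) by (simp add: vdot_def mult_ac)
  then have "\<sigma> l * vdot m w (u l) = 0" using orthonormal_family_coeff[OF v assms(3)] by simp
  then show ?thesis using \<sigma> assms(3) by (fastforce simp: vdot_commute)
qed

lemma is_csvd_add_rank_one:
  assumes X': "is_csvd m n X' k \<sigma>' u' v'" and "\<sigma> > 0" "vdot m u u = 1" "vdot n v v = 1"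
    and "\<forall>l<k. vdot m (u' l) u = 0" "\<forall>l<k. vdot n (v' l) v = 0"
    and X: "\<forall>a<m. \<forall>b<n. X a b = X' a b + \<sigma> * u a * v b"
  shows "is_csvd m n X (Suc k) (\<sigma>'(k := \<sigma>)) (u'(k := u)) (v'(k := v))"
  unfolding is_csvd_iff
proof (intro conjI)
  have \<sigma>': "\<forall>i<k. \<sigma>' i > 0" and u': "orthonormal_family m k u'" and v': "orthonormal_family n k v'"
    and X'_eq: "\<forall>a<m. \<forall>b<n. X' a b = (\<Sum>i<k. \<sigma>' i * u' i a * v' i b)"
    using X' unfolding is_csvd_iff by auto
  show "\<forall>i<Suc k. 0 < (\<sigma>'(k := \<sigma>)) i" using \<open>\<sigma> > 0\<close> \<sigma>' by (auto simp: less_Suc_eq)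
  show "orthonormal_family m (Suc k) (u'(k := u))"
    using assms by (intro orthonormal_family_extend[OF u']) auto
  show "orthonormal_family n (Suc k) (v'(k := v))"
    using assms by (intro orthonormal_family_extend[OF v']) auto
  have "(\<Sum>i<k. (\<sigma>'(k := \<sigma>)) i * (u'(k := u)) i a * (v'(k := v)) i b) = (\<Sum>i<k. \<sigma>' i * u' i a * v' i b)" for a b
    by (intro sum.cong) auto
  then show "\<forall>a<m. \<forall>b<n. X a b = (\<Sum>i<Suc k. (\<sigma>'(k := \<sigma>)) i * (u'(k := u)) i a * (v'(k := v)) i b)"
    using X X'_eq by simp
qed

lemma singular_vector_orthogonal_kernel:
  assumes "\<forall>b<n. (\<Sum>a<m. u a * X a b) = \<sigma> * v b" "\<sigma> \<noteq> 0" "\<forall>a<m. (\<Sum>b<n. X a b * w b) = 0"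
  shows "vdot n w v = 0"
proof -
  have "\<sigma> * vdot n w v = (\<Sum>b<n. w b * (\<Sum>a<m. u a * X a b))"
    unfolding vdot_def using assms(1) by (simp add: sum_distrib_left mult_ac)
  also have "\<dots> = (\<Sum>b<n. \<Sum>a<m. u a * (X a b * w b))"
    by (simp add: sum_distrib_left mult_ac)
  also have "\<dots> = (\<Sum>a<m. u a * (\<Sum>b<n. X a b * w b))"
    by (subst sum.swap) (simp add: sum_distrib_left)
  finally show ?thesis using assms(2,3) by simp
qed

lemma rank_one_deflation:
  assumes u: "vdot m u u = 1" and v: "vdot n v v = 1"
    and Xv: "\<forall>a<m. (\<Sum>b<n. X a b * v b) = \<sigma> * u a" and Xtu: "\<forall>b<n. (\<Sum>a<m. u a * X a b) = \<sigma> * v b"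
  defines "X' \<equiv> \<lambda>a b. X a b - \<sigma> * u a * v b"
  shows "(\<Sum>b<n. X' a b * w b) = (\<Sum>b<n. X a b * w b) - \<sigma> * u a * vdot n v w"
    and "\<forall>a<m. (\<Sum>b<n. X' a b * v b) = 0"
    and "\<forall>b<n. (\<Sum>a<m. u a * X' a b) = 0"
proof -
  show X'_mult: "(\<Sum>b<n. X' a b * w b) = (\<Sum>b<n. X a b * w b) - \<sigma> * u a * vdot n v w" for a w
    unfolding X'_def vdot_def by (simp add: algebra_simps sum_subtractf sum_distrib_left)
  show "\<forall>a<m. (\<Sum>b<n. X' a b * v b) = 0"
    using X'_mult Xv v by simp
  have "(\<Sum>a<m. u a * X' a b) = (\<Sum>a<m. u a * X a b) - \<sigma> * v b * vdot m u u" for b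
    unfolding X'_def vdot_def by (simp add: algebra_simps sum_subtractf sum_distrib_left)
  then show "\<forall>b<n. (\<Sum>a<m. u a * X' a b) = 0"
    using Xtu u by simp
qed

text \<open>Deflation: peel off a top singular pair and recurse on the remainder, whose right
  kernel contains one more orthonormal vector; the induction measure is the codimension
  \<open>n - j\<close> of that orthonormal family.\<close>
lemma csvd_exists_deflation:
  "n - j = d \<Longrightarrow> orthonormal_family n j e \<Longrightarrow> \<forall>i<j. \<forall>a<m. (\<Sum>b<n. X a b * e i b) = 0
   \<Longrightarrow> \<exists>k \<sigma> u v. is_csvd m n X k \<sigma> u v"
proof (induction d arbitrary: j e X rule: less_induct)
  case (less d)
  show ?case
  proof (cases "\<exists>a<m. \<exists>b<n. X a b \<noteq> 0")
    case False
    then have "is_csvd m n X 0 (\<lambda>_. 1) (\<lambda>_ _. 0) (\<lambda>_ _. 0)" by (simp add: is_csvd_def)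
    then show ?thesis by blast
  next
    case True
    then obtain a0 b0 where "a0 < m" "b0 < n" "X a0 b0 \<noteq> 0" by blast
    then obtain \<sigma> u v where \<sigma>: "\<sigma> > 0" and u: "vdot m u u = 1" and v: "vdot n v v = 1"
      and Xv: "\<forall>a<m. (\<Sum>b<n. X a b * v b) = \<sigma> * u a"
      and Xtu: "\<forall>b<n. (\<Sum>a<m. u a * X a b) = \<sigma> * v b"
      by (rule top_singular_pair)
    define X' where "X' a b = X a b - \<sigma> * u a * v b" for a b
    note X' = rank_one_deflation[OF u v Xv Xtu, folded X'_def]
    have e_v: "vdot n (e i) v = 0" if "i < j" for i
      using singular_vector_orthogonal_kernel[OF Xtu] \<sigma> less.prems(3) that by simp
    have e_v': "orthonormal_family n (Suc j) (e(j := v))"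
      using less.prems(2) v e_v by (intro orthonormal_family_extend) auto
    have "\<forall>i<Suc j. \<forall>a<m. (\<Sum>b<n. X' a b * (e(j := v)) i b) = 0"
      using X'(1,2) less.prems(3) e_v by (auto simp: less_Suc_eq vdot_commute)
    moreover have "n - Suc j < d"
      using orthonormal_family_le_dim[OF e_v'] less.prems(1) by simp
    ultimately obtain k \<sigma>' u' v' where X'_csvd: "is_csvd m n X' k \<sigma>' u' v'"
      using less.IH[OF _ refl e_v'] by blast
    have "\<forall>l<k. vdot m (u' l) u = 0"
      using csvd_left_factor_orthogonal[OF X'_csvd] X'(3) by blast
    moreover have "\<forall>l<k. vdot n (v' l) v = 0"
      using csvd_right_factor_orthogonal[OF X'_csvd] X'(2) by blast
    ultimately have "is_csvd m n X (Suc k) (\<sigma>'(k := \<sigma>)) (u'(k := u)) (v'(k := v))"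
      using \<sigma> u v by (intro is_csvd_add_rank_one[OF X'_csvd]) (auto simp: X'_def)
    then show ?thesis by blast
  qed
qed

lemma csvd_exists: "\<exists>k \<sigma> u v. is_csvd m n X k \<sigma> u v"
  by (rule csvd_exists_deflation[of n 0 "n" "\<lambda>_ _. 0"]) (auto simp: orthonormal_family_def)

lemma nuclear_norm_csvd:
  obtains k \<sigma> u v where "is_csvd m n X k \<sigma> u v" "nuclear_norm m n X = (\<Sum>i<k. \<sigma> i)"
proof -
  have "\<exists>s k \<sigma> u v. is_csvd m n X k \<sigma> u v \<and> s = (\<Sum>i<k. \<sigma> i)"
    using csvd_exists[of m n X] by blast
  from someI_ex[OF this] show ?thesis using that unfolding nuclear_norm_def by blast
qed

lemma spectral_norm_csvd:
  obtains k \<sigma> u v where "is_csvd m n X k \<sigma> u v" "spectral_norm m n X = Max (insert 0 (\<sigma> ` {..<k}))"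
proof -
  have "\<exists>s k \<sigma> u v. is_csvd m n X k \<sigma> u v \<and> s = Max (insert 0 (\<sigma> ` {..<k}))"
    using csvd_exists[of m n X] by blast
  from someI_ex[OF this] show ?thesis using that unfolding spectral_norm_def by blast
qed

section \<open>Nuclear norm, spectral norm and factorizations\<close>

definition frob_inner :: "nat \<Rightarrow> nat \<Rightarrow> (nat \<Rightarrow> nat \<Rightarrow> real) \<Rightarrow> (nat \<Rightarrow> nat \<Rightarrow> real) \<Rightarrow> real" where
  "frob_inner m n A B = (\<Sum>a<m. \<Sum>b<n. A a b * B a b)"

lemma nuclear_norm_nonneg: "0 \<le> nuclear_norm m n X"
proof -
  obtain k \<sigma> u v where "is_csvd m n X k \<sigma> u v" "nuclear_norm m n X = (\<Sum>i<k. \<sigma> i)"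
    by (rule nuclear_norm_csvd)
  then show ?thesis by (auto simp: is_csvd_def intro: sum_nonneg less_imp_le)
qed

lemma csvd_bilinear:
  assumes "\<forall>a<m. \<forall>b<n. G a b = (\<Sum>j<k. s j * c j a * e j b)"
  shows "(\<Sum>a<m. \<Sum>b<n. x a * G a b * y b) = (\<Sum>j<k. s j * vdot m x (c j) * vdot n (e j) y)"
proof -
  have "(\<Sum>a<m. \<Sum>b<n. x a * G a b * y b) = (\<Sum>a<m. x a * (\<Sum>b<n. G a b * y b))"
    by (simp add: sum_distrib_left mult_ac)
  also have "\<dots> = (\<Sum>a<m. x a * (\<Sum>j<k. s j * c j a * vdot n (e j) y))"
    using csvd_mult_vec[OF assms] by simp
  also have "\<dots> = (\<Sum>j<k. \<Sum>a<m. s j * vdot n (e j) y * (x a * c j a))"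
    by (subst sum.swap) (simp add: sum_distrib_left mult_ac)
  also have "\<dots> = (\<Sum>j<k. s j * vdot m x (c j) * vdot n (e j) y)"
    by (simp add: vdot_def[of m] sum_distrib_left mult_ac)
  finally show ?thesis .
qed

lemma bilinear_le_spectral_norm:
  assumes x: "vdot m x x = 1" and y: "vdot n y y = 1"
  shows "\<bar>\<Sum>a<m. \<Sum>b<n. x a * G a b * y b\<bar> \<le> spectral_norm m n G"
proof -
  obtain k s c e where G: "is_csvd m n G k s c e"
    and G_norm: "spectral_norm m n G = Max (insert 0 (s ` {..<k}))"
    by (rule spectral_norm_csvd)
  have s_pos: "\<forall>j<k. s j > 0" and c: "orthonormal_family m k c" and e: "orthonormal_family n k e"
    and G_eq: "\<forall>a<m. \<forall>b<n. G a b = (\<Sum>j<k. s j * c j a * e j b)"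
    using G unfolding is_csvd_iff by auto
  define \<gamma> where "\<gamma> = spectral_norm m n G"
  have s_le: "s j \<le> \<gamma>" if "j < k" for j
    unfolding \<gamma>_def G_norm using that by (intro Max_ge) auto
  have "0 \<le> \<gamma>" unfolding \<gamma>_def G_norm by (intro Max_ge) auto
  have "\<bar>\<Sum>a<m. \<Sum>b<n. x a * G a b * y b\<bar> \<le> (\<Sum>j<k. \<bar>s j * vdot m x (c j) * vdot n (e j) y\<bar>)"
    unfolding csvd_bilinear[OF G_eq] by (rule sum_abs)
  also have "\<dots> \<le> (\<Sum>j<k. \<gamma> * (((vdot m x (c j))\<^sup>2 + (vdot n y (e j))\<^sup>2) / 2))"
  proof (intro sum_mono)
    fix j assume "j \<in> {..<k}"
    then have "\<bar>s j\<bar> \<le> \<gamma>" using s_pos s_le by (simp add: less_imp_le)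
    moreover have "\<bar>vdot m x (c j) * vdot n (e j) y\<bar> \<le> ((vdot m x (c j))\<^sup>2 + (vdot n y (e j))\<^sup>2) / 2"
      using sum_squares_bound[of "\<bar>vdot m x (c j)\<bar>" "\<bar>vdot n y (e j)\<bar>"]
      by (simp add: abs_mult vdot_commute)
    ultimately show "\<bar>s j * vdot m x (c j) * vdot n (e j) y\<bar> \<le> \<gamma> * (((vdot m x (c j))\<^sup>2 + (vdot n y (e j))\<^sup>2) / 2)"
      unfolding abs_mult mult.assoc by (intro mult_mono) auto
  qed
  also have "\<dots> = \<gamma> * (((\<Sum>j<k. (vdot m x (c j))\<^sup>2) + (\<Sum>j<k. (vdot n y (e j))\<^sup>2)) / 2)"
    unfolding sum_distrib_left[symmetric] by (simp add: sum.distrib sum_divide_distrib[symmetric])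
  also have "\<dots> \<le> \<gamma> * ((1 + 1) / 2)"
    using bessel_inequality[OF c, of x] bessel_inequality[OF e, of y] x y \<open>0 \<le> \<gamma>\<close>
    by (intro mult_left_mono divide_right_mono add_mono) auto
  finally show ?thesis by (simp add: \<gamma>_def)
qed

lemma frob_inner_csvd:
  assumes "\<forall>a<m. \<forall>b<n. X a b = (\<Sum>i<k. \<sigma> i * u i a * v i b)"
  shows "frob_inner m n G X = (\<Sum>i<k. \<sigma> i * (\<Sum>a<m. \<Sum>b<n. u i a * G a b * v i b))"
proof -
  have "frob_inner m n G X = (\<Sum>a<m. \<Sum>b<n. \<Sum>i<k. \<sigma> i * (u i a * G a b * v i b))"
    unfolding frob_inner_def using assms
    by (intro sum.cong refl) (simp add: sum_distrib_left mult_ac)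
  also have "\<dots> = (\<Sum>i<k. \<sigma> i * (\<Sum>a<m. \<Sum>b<n. u i a * G a b * v i b))"
    by (simp add: sum.swap[of _ "{..<k}"] sum_distrib_left)
  finally show ?thesis .
qed

lemma frob_inner_le_spectral_nuclear:
  "\<bar>frob_inner m n G X\<bar> \<le> spectral_norm m n G * nuclear_norm m n X"
proof -
  obtain k \<sigma> u v where X: "is_csvd m n X k \<sigma> u v" and X_norm: "nuclear_norm m n X = (\<Sum>i<k. \<sigma> i)"
    by (rule nuclear_norm_csvd)
  have \<sigma>: "\<forall>i<k. \<sigma> i > 0" and u: "orthonormal_family m k u" and v: "orthonormal_family n k v"
    and X_eq: "\<forall>a<m. \<forall>b<n. X a b = (\<Sum>i<k. \<sigma> i * u i a * v i b)"
    using X unfolding is_csvd_iff by auto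
  have "\<bar>frob_inner m n G X\<bar> \<le> (\<Sum>i<k. \<bar>\<sigma> i * (\<Sum>a<m. \<Sum>b<n. u i a * G a b * v i b)\<bar>)"
    unfolding frob_inner_csvd[OF X_eq] by (rule sum_abs)
  also have "\<dots> \<le> (\<Sum>i<k. \<sigma> i * spectral_norm m n G)"
  proof (intro sum_mono)
    fix i assume "i \<in> {..<k}"
    then have "\<bar>\<Sum>a<m. \<Sum>b<n. u i a * G a b * v i b\<bar> \<le> spectral_norm m n G" "\<sigma> i > 0"
      using u v \<sigma> by (auto intro!: bilinear_le_spectral_norm simp: orthonormal_family_def)
    then show "\<bar>\<sigma> i * (\<Sum>a<m. \<Sum>b<n. u i a * G a b * v i b)\<bar> \<le> \<sigma> i * spectral_norm m n G"
      by (simp add: abs_mult)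
  qed
  also have "\<dots> = spectral_norm m n G * nuclear_norm m n X"
    by (simp add: X_norm sum_distrib_left mult_ac)
  finally show ?thesis .
qed

lemma nuclear_norm_factor_le:
  assumes "\<forall>a<m. \<forall>b<n. X a b = (\<Sum>k<r. U a k * V k b)"
  shows "nuclear_norm m n X \<le> ((\<Sum>a<m. \<Sum>k<r. (U a k)\<^sup>2) + (\<Sum>k<r. \<Sum>b<n. (V k b)\<^sup>2)) / 2"
proof -
  obtain K \<sigma> u v where X: "is_csvd m n X K \<sigma> u v" and X_norm: "nuclear_norm m n X = (\<Sum>i<K. \<sigma> i)"
    by (rule nuclear_norm_csvd)
  have u: "orthonormal_family m K u" and v: "orthonormal_family n K v"
    and X_eq: "\<forall>a<m. \<forall>b<n. X a b = (\<Sum>i<K. \<sigma> i * u i a * v i b)"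
    using X unfolding is_csvd_iff by auto
  define \<alpha> where "\<alpha> i k = vdot m (\<lambda>a. U a k) (u i)" for i k
  define \<beta> where "\<beta> i k = vdot n (\<lambda>b. V k b) (v i)" for i k
  have \<sigma>_eq: "\<sigma> i = (\<Sum>k<r. \<alpha> i k * \<beta> i k)" if "i < K" for i
  proof -
    have "(\<Sum>a<m. \<Sum>b<n. u i a * X a b * v i b) = (\<Sum>j<K. if j = i then \<sigma> i else 0)"
      unfolding csvd_bilinear[OF X_eq] using u v that unfolding orthonormal_family_def
      by (intro sum.cong) (auto simp: vdot_commute)
    moreover have "(\<Sum>a<m. \<Sum>b<n. u i a * X a b * v i b) = (\<Sum>k<r. \<Sum>a<m. \<Sum>b<n. (U a k * u i a) * (V k b * v i b))"
      using assms by (simp add: sum_distrib_left sum_distrib_right mult_ac sum.swap[of _ "{..<r}"])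
    ultimately show ?thesis
      using that by (simp add: \<alpha>_def \<beta>_def vdot_def sum_product)
  qed
  have "(\<Sum>i<K. \<sigma> i) = (\<Sum>i<K. \<Sum>k<r. \<alpha> i k * \<beta> i k)"
    using \<sigma>_eq by simp
  also have "\<dots> \<le> (\<Sum>i<K. \<Sum>k<r. ((\<alpha> i k)\<^sup>2 + (\<beta> i k)\<^sup>2) / 2)"
  proof (intro sum_mono)
    fix i k
    show "\<alpha> i k * \<beta> i k \<le> ((\<alpha> i k)\<^sup>2 + (\<beta> i k)\<^sup>2) / 2"
      using sum_squares_bound[of "\<alpha> i k" "\<beta> i k"] by simp
  qed
  also have "\<dots> = ((\<Sum>k<r. \<Sum>i<K. (\<alpha> i k)\<^sup>2) + (\<Sum>k<r. \<Sum>i<K. (\<beta> i k)\<^sup>2)) / 2"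
    by (simp add: add_divide_distrib sum.distrib sum_divide_distrib[symmetric] sum.swap[of _ "{..<K}"])
  also have "\<dots> \<le> ((\<Sum>k<r. vdot m (\<lambda>a. U a k) (\<lambda>a. U a k)) + (\<Sum>k<r. vdot n (\<lambda>b. V k b) (\<lambda>b. V k b))) / 2"
    unfolding \<alpha>_def \<beta>_def using bessel_inequality[OF u] bessel_inequality[OF v]
    by (intro divide_right_mono add_mono sum_mono) auto
  also have "\<dots> = ((\<Sum>a<m. \<Sum>k<r. (U a k)\<^sup>2) + (\<Sum>k<r. \<Sum>b<n. (V k b)\<^sup>2)) / 2"
    by (simp add: vdot_def power2_eq_square sum.swap[of _ "{..<r}"])
  finally show ?thesis using X_norm by simp
qed

lemma sum_sum_squares_eq_0_imp:
  fixes h :: "nat \<Rightarrow> nat \<Rightarrow> real"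
  assumes "(\<Sum>i<p. \<Sum>j<q. (h i j)\<^sup>2) = 0" "i < p" "j < q"
  shows "h i j = 0"
proof -
  have "\<forall>i<p. (\<Sum>j<q. (h i j)\<^sup>2) = 0"
    using assms(1) by (subst (asm) sum_nonneg_eq_0_iff) (auto intro: sum_nonneg)
  then show ?thesis
    using assms(2,3) by (simp add: sum_nonneg_eq_0_iff)
qed

lemma frob_inner_factor_left:
  "frob_inner m n G (\<lambda>a b. \<Sum>k<r. W a k * V k b) = (\<Sum>a<m. \<Sum>k<r. W a k * (\<Sum>b<n. G a b * V k b))"
proof -
  have "(\<Sum>b<n. G a b * (\<Sum>k<r. W a k * V k b)) = (\<Sum>k<r. W a k * (\<Sum>b<n. G a b * V k b))" for a
    unfolding sum_distrib_left by (subst sum.swap) (simp add: mult_ac)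
  then show ?thesis unfolding frob_inner_def by simp
qed

lemma frob_inner_factor_right:
  "frob_inner m n G (\<lambda>a b. \<Sum>k<r. U a k * D k b) = (\<Sum>k<r. \<Sum>b<n. (\<Sum>a<m. U a k * G a b) * D k b)"
proof -
  have "frob_inner m n G (\<lambda>a b. \<Sum>k<r. U a k * D k b) = (\<Sum>a<m. \<Sum>b<n. \<Sum>k<r. U a k * G a b * D k b)"
    unfolding frob_inner_def sum_distrib_left by (simp add: mult_ac)
  also have "\<dots> = (\<Sum>a<m. \<Sum>k<r. \<Sum>b<n. U a k * G a b * D k b)"
    by (intro sum.cong refl sum.swap)
  also have "\<dots> = (\<Sum>k<r. \<Sum>b<n. \<Sum>a<m. U a k * G a b * D k b)"
    by (subst sum.swap) (intro sum.cong refl sum.swap)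
  finally show ?thesis by (simp add: sum_distrib_right)
qed

lemma frob_inner_scale_left: "frob_inner m n (\<lambda>a b. c * A a b) B = c * frob_inner m n A B"
  by (simp add: frob_inner_def sum_distrib_left mult.assoc)

definition factorization_stationary ::
    "nat \<Rightarrow> nat \<Rightarrow> nat \<Rightarrow> (nat \<Rightarrow> nat \<Rightarrow> real) \<Rightarrow> (nat \<Rightarrow> nat \<Rightarrow> real) \<Rightarrow> (nat \<Rightarrow> nat \<Rightarrow> real) \<Rightarrow> bool" where
  "factorization_stationary m n r G U V \<longleftrightarrow>
    (\<forall>W D. (\<Sum>a<m. \<Sum>k<r. U a k * W a k) + (\<Sum>k<r. \<Sum>b<n. V k b * D k b)
      + frob_inner m n G (\<lambda>a b. \<Sum>k<r. W a k * V k b + U a k * D k b) = 0)"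

text \<open>Testing the first-order condition against its own gradient forces the gradient to vanish.\<close>
lemma factorization_stationary_eqs:
  assumes "factorization_stationary m n r G U V"
  shows "\<forall>k<r. \<forall>b<n. V k b = - (\<Sum>a<m. U a k * G a b)"
    and "\<forall>a<m. \<forall>k<r. U a k = - (\<Sum>b<n. G a b * V k b)"
proof -
  have frob_split: "frob_inner m n G (\<lambda>a b. \<Sum>k<r. W a k * V k b + U a k * D k b)
      = frob_inner m n G (\<lambda>a b. \<Sum>k<r. W a k * V k b) + frob_inner m n G (\<lambda>a b. \<Sum>k<r. U a k * D k b)"
    for W D by (simp add: frob_inner_def sum.distrib distrib_left)
  note grad = assms[unfolded factorization_stationary_def]
  define D where "D k b = V k b + (\<Sum>a<m. U a k * G a b)" for k b
  have "(\<Sum>k<r. \<Sum>b<n. V k b * D k b) + frob_inner m n G (\<lambda>a b. \<Sum>k<r. U a k * D k b) = 0"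
    using grad[rule_format, of "\<lambda>_ _. 0" D] by (simp add: frob_split frob_inner_def)
  then have "(\<Sum>k<r. \<Sum>b<n. (D k b)\<^sup>2) = 0"
    unfolding frob_inner_factor_right
    by (simp add: D_def power2_eq_square algebra_simps sum.distrib sum_distrib_left)
  then show "\<forall>k<r. \<forall>b<n. V k b = - (\<Sum>a<m. U a k * G a b)"
    using sum_sum_squares_eq_0_imp unfolding D_def by fastforce
  define W where "W a k = U a k + (\<Sum>b<n. G a b * V k b)" for a k
  have "(\<Sum>a<m. \<Sum>k<r. U a k * W a k) + frob_inner m n G (\<lambda>a b. \<Sum>k<r. W a k * V k b) = 0"
    using grad[rule_format, of W "\<lambda>_ _. 0"] by (simp add: frob_split frob_inner_def)
  then have "(\<Sum>a<m. \<Sum>k<r. (W a k)\<^sup>2) = 0"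
    unfolding frob_inner_factor_left
    by (simp add: W_def power2_eq_square algebra_simps sum.distrib sum_distrib_left)
  then show "\<forall>a<m. \<forall>k<r. U a k = - (\<Sum>b<n. G a b * V k b)"
    using sum_sum_squares_eq_0_imp unfolding W_def by fastforce
qed

lemma nuclear_norm_le_of_factorization_stationary:
  assumes "factorization_stationary m n r G U V"
  shows "nuclear_norm m n (\<lambda>a b. \<Sum>k<r. U a k * V k b) \<le> - frob_inner m n G (\<lambda>a b. \<Sum>k<r. U a k * V k b)"
proof -
  note V_eq = factorization_stationary_eqs(1)[OF assms] and U_eq = factorization_stationary_eqs(2)[OF assms]
  have "frob_inner m n G (\<lambda>a b. \<Sum>k<r. U a k * V k b) = (\<Sum>k<r. \<Sum>b<n. - (V k b)\<^sup>2)"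
    unfolding frob_inner_factor_right using V_eq by (intro sum.cong refl) (simp add: power2_eq_square)
  moreover have "frob_inner m n G (\<lambda>a b. \<Sum>k<r. U a k * V k b) = (\<Sum>a<m. \<Sum>k<r. - (U a k)\<^sup>2)"
    unfolding frob_inner_factor_left using U_eq by (intro sum.cong refl) (simp add: power2_eq_square)
  moreover have "nuclear_norm m n (\<lambda>a b. \<Sum>k<r. U a k * V k b)
      \<le> ((\<Sum>a<m. \<Sum>k<r. (U a k)\<^sup>2) + (\<Sum>k<r. \<Sum>b<n. (V k b)\<^sup>2)) / 2"
    by (rule nuclear_norm_factor_le) simp
  ultimately show ?thesis by (simp add: sum_negf)
qed

section \<open>The measurement map and the convex problem\<close>

definition matrix_unit :: "nat \<Rightarrow> nat \<Rightarrow> nat \<Rightarrow> nat \<Rightarrow> real" where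
  "matrix_unit a b = (\<lambda>a' b'. if a' = a \<and> b' = b then 1 else 0)"

lemma finite_area: "finite (area ar n k)"
  by (rule finite_subset[of _ "{..<n}"]) (auto simp: area_def)

lemma sum_mult_matrix_unit:
  fixes X :: "nat \<Rightarrow> nat \<Rightarrow> real"
  assumes "a0 < m" "b0 < n"
  shows "(\<Sum>a<m. \<Sum>b<n. X a b * matrix_unit a b a0 b0) = X a0 b0"
proof -
  have "(\<Sum>b<n. X a b * matrix_unit a b a0 b0) = (if a = a0 then X a0 b0 else 0)" for a
  proof -
    have "(\<Sum>b<n. X a b * matrix_unit a b a0 b0) = (\<Sum>b<n. if b = b0 then (if a = a0 then X a b else 0) else 0)"
      unfolding matrix_unit_def by (intro sum.cong) auto
    then show ?thesis using assms by simp
  qed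
  then show ?thesis using assms by simp
qed

lemma Eapp_cong:
  assumes "\<forall>a<m. \<forall>b\<in>area ar n k. X a b = Y a b"
  shows "Eapp Ec m ar n l k X i = Eapp Ec m ar n l k Y i"
  unfolding Eapp_def using assms by (intro sum.cong refl) auto

lemma Eapp_matrix_unit:
  assumes "a < m" "b < n"
  shows "Eapp Ec m ar n l k (matrix_unit a b) i = (if ar b = k then Ec l k i a b else 0)"
proof -
  have "Eapp Ec m ar n l k (matrix_unit a b) i =
     (\<Sum>a'<m. \<Sum>b'\<in>area ar n k. if a' = a then (if b' = b then Ec l k i a b else 0) else 0)"
    unfolding Eapp_def matrix_unit_def by (intro sum.cong refl) auto
  also have "\<dots> = (\<Sum>a'<m. if a' = a then (\<Sum>b'\<in>area ar n k. if b' = b then Ec l k i a b else 0) else 0)"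
    by (intro sum.cong refl) auto
  also have "\<dots> = (\<Sum>b'\<in>area ar n k. if b' = b then Ec l k i a b else 0)"
    using assms by simp
  also have "\<dots> = (if ar b = k then Ec l k i a b else 0)"
    using assms finite_area by (simp add: area_def)
  finally show ?thesis .
qed

lemma Eapp_expand:
  "Eapp Ec m ar n l k X i = (\<Sum>a<m. \<Sum>b<n. complex_of_real (X a b) * Eapp Ec m ar n l k (matrix_unit a b) i)"
proof -
  have "(\<Sum>b<n. complex_of_real (X a b) * Eapp Ec m ar n l k (matrix_unit a b) i)
      = (\<Sum>b\<in>area ar n k. Ec l k i a b * complex_of_real (X a b))" if "a < m" for a
  proof -
    have "(\<Sum>b<n. complex_of_real (X a b) * Eapp Ec m ar n l k (matrix_unit a b) i)
        = (\<Sum>b<n. if ar b = k then Ec l k i a b * complex_of_real (X a b) else 0)"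
      using that by (intro sum.cong refl) (auto simp: Eapp_matrix_unit)
    also have "\<dots> = (\<Sum>b\<in>area ar n k. Ec l k i a b * complex_of_real (X a b))"
      unfolding sum.inter_filter[symmetric, OF finite_lessThan] area_def by (simp add: conj_commute)
    finally show ?thesis .
  qed
  then show ?thesis unfolding Eapp_def by simp
qed

lemma Eapp_block_expand:
  "Eapp Ec m ar n l l X i + (\<Sum>j\<in>N l. Eapp Ec m ar n l j X i) =
   (\<Sum>a<m. \<Sum>b<n. complex_of_real (X a b) *
      (Eapp Ec m ar n l l (matrix_unit a b) i + (\<Sum>j\<in>N l. Eapp Ec m ar n l j (matrix_unit a b) i)))"
proof -
  have "(\<Sum>j\<in>N l. Eapp Ec m ar n l j X i)
      = (\<Sum>j\<in>N l. \<Sum>a<m. \<Sum>b<n. complex_of_real (X a b) * Eapp Ec m ar n l j (matrix_unit a b) i)"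
    by (intro sum.cong refl) (rule Eapp_expand)
  also have "\<dots> = (\<Sum>a<m. \<Sum>b<n. \<Sum>j\<in>N l. complex_of_real (X a b) * Eapp Ec m ar n l j (matrix_unit a b) i)"
    by (subst sum.swap) (intro sum.cong refl sum.swap)
  finally show ?thesis
    by (subst Eapp_expand) (simp add: sum.distrib[symmetric] distrib_left sum_distrib_left)
qed

lemma Bmap_expand:
  assumes \<Omega>: "\<forall>l<nA. \<Omega> l \<subseteq> {..<m} \<times> area ar n l" and c: "c \<in> Bidx nA \<Omega> p"
  shows "Bmap m n ar N Ec \<mu> \<nu> X c = (\<Sum>a<m. \<Sum>b<n. X a b * Bmap m n ar N Ec \<mu> \<nu> (matrix_unit a b) c)"
proof (cases c)
  case (Inl x)
  obtain a0 b0 where x: "x = (a0, b0)" by (cases x)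
  then have "a0 < m" "b0 < n" using c \<Omega> Inl by (auto simp: Bidx_def area_def)
  then show ?thesis unfolding Inl x Bmap_def by (simp add: sum_mult_matrix_unit)
next
  case (Inr y)
  obtain l i t where y: "y = (l, i, t)" by (cases y) auto
  let ?z = "\<lambda>a b. Eapp Ec m ar n l l (matrix_unit a b) i + (\<Sum>j\<in>N l. Eapp Ec m ar n l j (matrix_unit a b) i)"
  have "Bmap m n ar N Ec \<mu> \<nu> X c = sqrt (\<nu>/\<mu>) * (if t then Re (\<Sum>a<m. \<Sum>b<n. complex_of_real (X a b) * ?z a b)
      else Im (\<Sum>a<m. \<Sum>b<n. complex_of_real (X a b) * ?z a b))"
    unfolding Inr y Bmap_def Let_def prod.case sum.case Eapp_block_expand[of Ec m ar n l X i N] by (rule refl)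
  also have "\<dots> = (\<Sum>a<m. \<Sum>b<n. X a b * (sqrt (\<nu>/\<mu>) * (if t then Re (?z a b) else Im (?z a b))))"
    by (cases t) (simp_all add: sum_distrib_left mult_ac)
  also have "\<dots> = (\<Sum>a<m. \<Sum>b<n. X a b * Bmap m n ar N Ec \<mu> \<nu> (matrix_unit a b) c)"
    unfolding Inr y Bmap_def Let_def by simp
  finally show ?thesis .
qed

lemma Bmap_diff:
  assumes "\<forall>l<nA. \<Omega> l \<subseteq> {..<m} \<times> area ar n l" "c \<in> Bidx nA \<Omega> p"
  shows "Bmap m n ar N Ec \<mu> \<nu> (\<lambda>a b. X a b - Y a b) c = Bmap m n ar N Ec \<mu> \<nu> X c - Bmap m n ar N Ec \<mu> \<nu> Y c"
  using Bmap_expand[OF assms, where X = X] Bmap_expand[OF assms, where X = Y]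
    Bmap_expand[OF assms, where X = "\<lambda>a b. X a b - Y a b"]
  by (simp add: left_diff_distrib sum_subtractf)

lemma Badj_adjoint:
  assumes "\<forall>l<nA. \<Omega> l \<subseteq> {..<m} \<times> area ar n l"
  shows "frob_inner m n (Badj m n nA ar \<Omega> N Ec p \<mu> \<nu> z) Y = (\<Sum>c\<in>Bidx nA \<Omega> p. z c * Bmap m n ar N Ec \<mu> \<nu> Y c)"
proof -
  let ?B = "Bidx nA \<Omega> p" and ?Bm = "Bmap m n ar N Ec \<mu> \<nu>"
  have "frob_inner m n (Badj m n nA ar \<Omega> N Ec p \<mu> \<nu> z) Y
      = (\<Sum>a<m. \<Sum>b<n. \<Sum>c\<in>?B. z c * (Y a b * ?Bm (matrix_unit a b) c))"
    unfolding frob_inner_def Badj_def matrix_unit_def[symmetric]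
    by (intro sum.cong refl) (simp add: sum_distrib_left mult_ac)
  also have "\<dots> = (\<Sum>a<m. \<Sum>c\<in>?B. \<Sum>b<n. z c * (Y a b * ?Bm (matrix_unit a b) c))"
    by (intro sum.cong refl sum.swap)
  also have "\<dots> = (\<Sum>c\<in>?B. \<Sum>a<m. \<Sum>b<n. z c * (Y a b * ?Bm (matrix_unit a b) c))"
    by (rule sum.swap)
  also have "\<dots> = (\<Sum>c\<in>?B. z c * ?Bm Y c)"
    using Bmap_expand[OF assms] by (intro sum.cong refl) (simp add: sum_distrib_left)
  finally show ?thesis .
qed

lemma sum_Bidx:
  assumes "\<forall>l<nA. \<Omega> l \<subseteq> {..<m} \<times> area ar n l"
  shows "(\<Sum>c\<in>Bidx nA \<Omega> p. g c) = (\<Sum>l<nA. \<Sum>x\<in>\<Omega> l. g (Inl x))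
     + (\<Sum>l<nA. \<Sum>i<p l. g (Inr (l, i, True)) + g (Inr (l, i, False)))"
proof -
  define T where "T = Sigma {..<nA} (\<lambda>l. {..<p l} \<times> (UNIV :: bool set))"
  have fin_\<Omega>: "finite (\<Omega> l)" if "l < nA" for l
    using assms that finite_area by (meson finite_SigmaI finite_lessThan finite_subset)
  have disj: "\<Omega> i \<inter> \<Omega> j = {}" if "i < nA" "j < nA" "i \<noteq> j" for i j
    using assms that unfolding area_def by blast
  have B: "Bidx nA \<Omega> p = Inl ` (\<Union>l<nA. \<Omega> l) \<union> Inr ` T"
    unfolding Bidx_def T_def by auto
  have "(\<Sum>c\<in>Bidx nA \<Omega> p. g c) = (\<Sum>c\<in>Inl ` (\<Union>l<nA. \<Omega> l). g c) + (\<Sum>c\<in>Inr ` T. g c)"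
    unfolding B by (rule sum.union_disjoint) (use fin_\<Omega> in \<open>auto simp: T_def\<close>)
  also have "\<dots> = (\<Sum>x\<in>(\<Union>l<nA. \<Omega> l). g (Inl x)) + (\<Sum>x\<in>T. g (Inr x))"
    by (simp add: sum.reindex)
  also have "(\<Sum>x\<in>(\<Union>l<nA. \<Omega> l). g (Inl x)) = (\<Sum>l<nA. \<Sum>x\<in>\<Omega> l. g (Inl x))"
    using fin_\<Omega> disj by (intro sum.UNION_disjoint) auto
  also have "(\<Sum>x\<in>T. g (Inr x)) = (\<Sum>l<nA. \<Sum>it\<in>{..<p l} \<times> UNIV. g (Inr (l, it)))"
    unfolding T_def by (subst sum.Sigma) auto
  also have "\<dots> = (\<Sum>l<nA. \<Sum>i<p l. \<Sum>t\<in>UNIV. g (Inr (l, i, t)))"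
    by (intro sum.cong refl, subst sum.Sigma) auto
  also have "\<dots> = (\<Sum>l<nA. \<Sum>i<p l. g (Inr (l, i, True)) + g (Inr (l, i, False)))"
    by (simp add: UNIV_bool add.commute)
  finally show ?thesis .
qed

lemma Bmap_block_pairing:
  assumes "\<mu> > 0" "\<nu> > 0"
  shows "\<mu> * ((Bmap m n ar N Ec \<mu> \<nu> X (Inr (l, i, True)) - dvec \<mu> \<nu> M f (Inr (l, i, True))) * Bmap m n ar N Ec \<mu> \<nu> Y (Inr (l, i, True)))
       + \<mu> * ((Bmap m n ar N Ec \<mu> \<nu> X (Inr (l, i, False)) - dvec \<mu> \<nu> M f (Inr (l, i, False))) * Bmap m n ar N Ec \<mu> \<nu> Y (Inr (l, i, False)))
     = \<nu> * Re (cnj (Eapp Ec m ar n l l X i + (\<Sum>j\<in>N l. Eapp Ec m ar n l j X i) - f l i)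
              * (Eapp Ec m ar n l l Y i + (\<Sum>j\<in>N l. Eapp Ec m ar n l j Y i)))"
proof -
  define zX where "zX = Eapp Ec m ar n l l X i + (\<Sum>j\<in>N l. Eapp Ec m ar n l j X i)"
  define zY where "zY = Eapp Ec m ar n l l Y i + (\<Sum>j\<in>N l. Eapp Ec m ar n l j Y i)"
  define s where "s = sqrt (\<nu>/\<mu>)"
  have \<nu>: "\<nu> = \<mu> * (s * s)" using assms unfolding s_def by simp
  have "Bmap m n ar N Ec \<mu> \<nu> X (Inr (l, i, t)) = s * (if t then Re zX else Im zX)"
    and "Bmap m n ar N Ec \<mu> \<nu> Y (Inr (l, i, t)) = s * (if t then Re zY else Im zY)"
    and "dvec \<mu> \<nu> M f (Inr (l, i, t)) = s * (if t then Re (f l i) else Im (f l i))" for t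
    unfolding Bmap_def dvec_def Let_def zX_def zY_def s_def by simp_all
  then show ?thesis
    unfolding zX_def[symmetric] zY_def[symmetric] \<nu> by (simp add: algebra_simps)
qed

lemma frob_inner_Badj_le_residual_diff:
  assumes "\<forall>l<nA. \<Omega> l \<subseteq> {..<m} \<times> area ar n l" and "\<mu> > 0"
  shows "frob_inner m n (\<lambda>a b. \<mu> * Badj m n nA ar \<Omega> N Ec p \<mu> \<nu> (\<lambda>c. Bmap m n ar N Ec \<mu> \<nu> Y c - d c) a b)
           (\<lambda>a b. X a b - Y a b)
     \<le> \<mu>/2 * (\<Sum>c\<in>Bidx nA \<Omega> p. (Bmap m n ar N Ec \<mu> \<nu> X c - d c)\<^sup>2)
       - \<mu>/2 * (\<Sum>c\<in>Bidx nA \<Omega> p. (Bmap m n ar N Ec \<mu> \<nu> Y c - d c)\<^sup>2)"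
proof -
  let ?B = "Bidx nA \<Omega> p" and ?Bm = "Bmap m n ar N Ec \<mu> \<nu>"
  have "frob_inner m n (\<lambda>a b. \<mu> * Badj m n nA ar \<Omega> N Ec p \<mu> \<nu> (\<lambda>c. ?Bm Y c - d c) a b) (\<lambda>a b. X a b - Y a b)
      = \<mu> * frob_inner m n (Badj m n nA ar \<Omega> N Ec p \<mu> \<nu> (\<lambda>c. ?Bm Y c - d c)) (\<lambda>a b. X a b - Y a b)"
    by (rule frob_inner_scale_left)
  also have "\<dots> = \<mu> * (\<Sum>c\<in>?B. (?Bm Y c - d c) * (?Bm X c - ?Bm Y c))"
    unfolding Badj_adjoint[OF assms(1)] using Bmap_diff[OF assms(1)] by simp
  also have "\<dots> \<le> \<mu> * (\<Sum>c\<in>?B. ((?Bm X c - d c)\<^sup>2 - (?Bm Y c - d c)\<^sup>2) / 2)"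
  proof (intro mult_left_mono sum_mono)
    fix c
    have "0 \<le> (?Bm X c - ?Bm Y c)\<^sup>2" by simp
    then show "(?Bm Y c - d c) * (?Bm X c - ?Bm Y c) \<le> ((?Bm X c - d c)\<^sup>2 - (?Bm Y c - d c)\<^sup>2) / 2"
      by (simp add: power2_eq_square algebra_simps)
  qed (use assms(2) in simp)
  also have "\<dots> = \<mu>/2 * (\<Sum>c\<in>?B. (?Bm X c - d c)\<^sup>2) - \<mu>/2 * (\<Sum>c\<in>?B. (?Bm Y c - d c)\<^sup>2)"
    by (simp add: sum_divide_distrib[symmetric] sum_subtractf right_diff_distrib)
  finally show ?thesis .
qed

text \<open>\<open>- G\<close> is a subgradient of the nuclear norm at \<open>Y\<close>: by trace duality
  \<open>\<parallel>X\<parallel>\<^sub>* \<ge> - \<langle>G, X\<rangle>\<close> for all \<open>X\<close>, with equality at \<open>Y\<close>.\<close>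
lemma NNobj_minimal_of_certificate:
  assumes "\<forall>l<nA. \<Omega> l \<subseteq> {..<m} \<times> area ar n l" and "\<mu> > 0"
    and G: "G = (\<lambda>a b. \<mu> * Badj m n nA ar \<Omega> N Ec p \<mu> \<nu> (\<lambda>c. Bmap m n ar N Ec \<mu> \<nu> Y c - dvec \<mu> \<nu> M f c) a b)"
    and "spectral_norm m n G \<le> 1" and "nuclear_norm m n Y \<le> - frob_inner m n G Y"
  shows "NNobj m n nA ar \<Omega> N Ec p f \<mu> \<nu> M Y \<le> NNobj m n nA ar \<Omega> N Ec p f \<mu> \<nu> M X"
proof -
  have "\<bar>frob_inner m n G X\<bar> \<le> spectral_norm m n G * nuclear_norm m n X"
    by (rule frob_inner_le_spectral_nuclear)
  also have "\<dots> \<le> nuclear_norm m n X"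
    using mult_right_mono[OF assms(4) nuclear_norm_nonneg] by simp
  finally have "\<bar>frob_inner m n G X\<bar> \<le> nuclear_norm m n X" .
  moreover have "frob_inner m n G (\<lambda>a b. X a b - Y a b) = frob_inner m n G X - frob_inner m n G Y"
    by (simp add: frob_inner_def right_diff_distrib sum_subtractf)
  ultimately show ?thesis
    using frob_inner_Badj_le_residual_diff[OF assms(1,2), where d = "dvec \<mu> \<nu> M f" and Y = Y and X = X
        and \<nu> = \<nu> and N = N and Ec = Ec and p = p] assms(5)
    unfolding NNobj_def G[symmetric] by linarith
qed

section \<open>Stationary points of the decentralized problem\<close>

definition prodUV_deriv :: "nat \<Rightarrow> (nat \<Rightarrow> nat \<Rightarrow> nat \<Rightarrow> real) \<Rightarrow> (nat \<Rightarrow> nat \<Rightarrow> nat \<Rightarrow> real)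
    \<Rightarrow> (nat \<Rightarrow> nat \<Rightarrow> nat \<Rightarrow> real) \<Rightarrow> (nat \<Rightarrow> nat \<Rightarrow> nat \<Rightarrow> real) \<Rightarrow> nat \<Rightarrow> nat \<Rightarrow> nat \<Rightarrow> real" where
  "prodUV_deriv r U V dU dV l = (\<lambda>a b. prodUV r dU V l a b + prodUV r U dV l a b)"

lemma prodUV_line:
  "prodUV r (\<lambda>l a k. U l a k + t * dU l a k) (\<lambda>l k b. V l k b + t * dV l k b) l =
   (\<lambda>a b. prodUV r U V l a b + t * prodUV_deriv r U V dU dV l a b + t\<^sup>2 * prodUV r dU dV l a b)"
  unfolding prodUV_def prodUV_deriv_def
  by (intro ext) (simp add: algebra_simps sum.distrib sum_distrib_left power2_eq_square)

lemma Eapp_quadratic: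
  "Eapp Ec m ar n l k (\<lambda>a b. A a b + t * B a b + t\<^sup>2 * C a b) i =
   Eapp Ec m ar n l k A i + complex_of_real t * Eapp Ec m ar n l k B i + complex_of_real (t\<^sup>2) * Eapp Ec m ar n l k C i"
  unfolding Eapp_def by (simp add: algebra_simps sum.distrib sum_distrib_left)

lemma DERIV_cmod_sq_quadratic:
  "((\<lambda>t. (cmod (z0 + complex_of_real t * z1 + complex_of_real (t\<^sup>2) * z2))\<^sup>2)
     has_real_derivative 2 * Re (cnj z0 * z1)) (at 0)"
proof -
  have "(cmod (z0 + complex_of_real t * z1 + complex_of_real (t\<^sup>2) * z2))\<^sup>2 =
     (Re z0 + t * Re z1 + t\<^sup>2 * Re z2)\<^sup>2 + (Im z0 + t * Im z1 + t\<^sup>2 * Im z2)\<^sup>2" for t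
    by (simp add: cmod_power2)
  moreover have "((\<lambda>t. (Re z0 + t * Re z1 + t\<^sup>2 * Re z2)\<^sup>2 + (Im z0 + t * Im z1 + t\<^sup>2 * Im z2)\<^sup>2)
      has_real_derivative 2 * Re z0 * Re z1 + 2 * Im z0 * Im z1) (at 0)"
    by (auto intro!: derivative_eq_intros)
  ultimately show ?thesis by (simp add: mult.assoc)
qed

lemma DERIV_Re_mult_quadratic:
  "((\<lambda>t. Re (w * (z0 + complex_of_real t * z1 + complex_of_real (t\<^sup>2) * z2))) has_real_derivative Re (w * z1)) (at 0)"
proof -
  have "Re (w * (z0 + complex_of_real t * z1 + complex_of_real (t\<^sup>2) * z2)) =
     Re (w * z0) + t * Re (w * z1) + t\<^sup>2 * Re (w * z2)" for t
    by (simp add: algebra_simps)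
  then show ?thesis by (auto intro!: derivative_eq_intros)
qed

lemma DERIV_entry_fit:
  "((\<lambda>t. \<mu>/2 * (\<Sum>(a,b)\<in>\<Omega>. (prodUV r (\<lambda>l a k. U l a k + t * dU l a k) (\<lambda>l k b. V l k b + t * dV l k b) l a b - M a b)\<^sup>2))
     has_real_derivative \<mu>/2 * (\<Sum>(a,b)\<in>\<Omega>. 2 * (prodUV r U V l a b - M a b) * prodUV_deriv r U V dU dV l a b)) (at 0)"
  unfolding prodUV_line case_prod_beta
  by (intro DERIV_cmult DERIV_sum) (auto intro!: derivative_eq_intros)

lemma DERIV_block_fit:
  "((\<lambda>t. (cmod (Eapp Ec m ar n l l (prodUV r (\<lambda>l a k. U l a k + t * dU l a k) (\<lambda>l k b. V l k b + t * dV l k b) l) i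
        + (\<Sum>j\<in>N l. q l j i + complex_of_real t * dq l j i) - f l i))\<^sup>2)
     has_real_derivative 2 * Re (cnj (Eapp Ec m ar n l l (prodUV r U V l) i + (\<Sum>j\<in>N l. q l j i) - f l i)
        * (Eapp Ec m ar n l l (prodUV_deriv r U V dU dV l) i + (\<Sum>j\<in>N l. dq l j i)))) (at 0)"
proof -
  have "Eapp Ec m ar n l l (prodUV r (\<lambda>l a k. U l a k + t * dU l a k) (\<lambda>l k b. V l k b + t * dV l k b) l) i
        + (\<Sum>j\<in>N l. q l j i + complex_of_real t * dq l j i) - f l i =
     (Eapp Ec m ar n l l (prodUV r U V l) i + (\<Sum>j\<in>N l. q l j i) - f l i)
     + complex_of_real t * (Eapp Ec m ar n l l (prodUV_deriv r U V dU dV l) i + (\<Sum>j\<in>N l. dq l j i))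
     + complex_of_real (t\<^sup>2) * Eapp Ec m ar n l l (prodUV r dU dV l) i" for t
    unfolding prodUV_line Eapp_quadratic by (simp add: sum.distrib sum_distrib_left algebra_simps)
  then show ?thesis by (simp only: DERIV_cmod_sq_quadratic)
qed

lemma DERIV_coupling_multiplier:
  "((\<lambda>t. Re (w * (Eapp Ec m ar n l j (prodUV r (\<lambda>l a k. U l a k + t * dU l a k) (\<lambda>l k b. V l k b + t * dV l k b) j) i
        - (q l j i + complex_of_real t * dq l j i))))
     has_real_derivative Re (w * (Eapp Ec m ar n l j (prodUV_deriv r U V dU dV j) i - dq l j i))) (at 0)"
proof -
  have "Eapp Ec m ar n l j (prodUV r (\<lambda>l a k. U l a k + t * dU l a k) (\<lambda>l k b. V l k b + t * dV l k b) j) i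
        - (q l j i + complex_of_real t * dq l j i) =
     (Eapp Ec m ar n l j (prodUV r U V j) i - q l j i)
     + complex_of_real t * (Eapp Ec m ar n l j (prodUV_deriv r U V dU dV j) i - dq l j i)
     + complex_of_real (t\<^sup>2) * Eapp Ec m ar n l j (prodUV r dU dV j) i" for t
    unfolding prodUV_line Eapp_quadratic by (simp add: algebra_simps)
  then show ?thesis by (simp only: DERIV_Re_mult_quadratic)
qed

lemma Plag_line_DERIV:
  "((\<lambda>t. Plag m n r nA ar \<Omega> N Ec p f \<mu> \<nu> M
              (\<lambda>l a k. U l a k + t * dU l a k) (\<lambda>l k b. V l k b + t * dV l k b)
              (\<lambda>l j a k. S l j a k + t * dS l j a k) (\<lambda>l j i. q l j i + complex_of_real t * dq l j i)
              Lam Gam Pm) has_real_derivative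
   (\<Sum>l<nA. (1/2) * ((1 / real nA) * (\<Sum>a<m. \<Sum>k<r. 2 * U l a k * dU l a k)
                + (\<Sum>k<r. \<Sum>b\<in>area ar n l. 2 * V l k b * dV l k b))
     + \<mu>/2 * (\<Sum>(a,b)\<in>\<Omega> l. 2 * (prodUV r U V l a b - M a b) * prodUV_deriv r U V dU dV l a b)
     + \<nu>/2 * (\<Sum>i<p l. 2 * Re (cnj (Eapp Ec m ar n l l (prodUV r U V l) i + (\<Sum>j\<in>N l. q l j i) - f l i)
        * (Eapp Ec m ar n l l (prodUV_deriv r U V dU dV l) i + (\<Sum>j\<in>N l. dq l j i)))))
   + (\<Sum>l<nA. \<Sum>j\<in>N l.
         (\<Sum>a<m. \<Sum>k<r. Lam l j a k * (dU l a k - dS l j a k))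
       + (\<Sum>a<m. \<Sum>k<r. Gam l j a k * (dS l j a k - dU j a k))
       + (\<Sum>i<p l. Re (cnj (Pm l j i) * (Eapp Ec m ar n l j (prodUV_deriv r U V dU dV j) i - dq l j i))))) (at 0)"
  unfolding Plag_def Pobj_def
  by (intro DERIV_add DERIV_sum DERIV_entry_fit DERIV_cmult DERIV_block_fit DERIV_coupling_multiplier)
    (auto intro!: derivative_eq_intros)

lemma Eapp_block_local:
  assumes "\<forall>j\<in>insert l (N l). \<forall>a<m. \<forall>b\<in>area ar n j. P j a b = X a b"
    and "\<forall>j\<in>N l. q j = Eapp Ec m ar n l j (P j) i"
  shows "Eapp Ec m ar n l l (P l) i + (\<Sum>j\<in>N l. q j) = Eapp Ec m ar n l l X i + (\<Sum>j\<in>N l. Eapp Ec m ar n l j X i)"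
proof -
  have "Eapp Ec m ar n l j (P j) i = Eapp Ec m ar n l j X i" if "j \<in> insert l (N l)" for j
    using assms(1) that by (intro Eapp_cong) auto
  then show ?thesis
    using assms(2) by (simp cong: sum.cong)
qed

lemma block_fit_derivative_eq_Bmap:
  fixes P Y :: "nat \<Rightarrow> nat \<Rightarrow> nat \<Rightarrow> real" and X :: "nat \<Rightarrow> nat \<Rightarrow> real"
  assumes local: "insert l (N l) \<subseteq> {..<nA}"
    and P: "\<forall>l<nA. \<forall>a<m. \<forall>b\<in>area ar n l. P l a b = X a b"
    and q: "\<forall>j\<in>N l. \<forall>i<p l. q l j i = Eapp Ec m ar n l j (P j) i"
    and dq: "\<forall>j\<in>N l. \<forall>i<p l. dq l j i = Eapp Ec m ar n l j (Y j) i"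
    and "\<mu> > 0" "\<nu> > 0"
  defines "Yg \<equiv> \<lambda>a b. Y (ar b) a b"
  shows "(\<Sum>i<p l. \<mu> * ((Bmap m n ar N Ec \<mu> \<nu> X (Inr (l, i, True)) - dvec \<mu> \<nu> M f (Inr (l, i, True)))
              * Bmap m n ar N Ec \<mu> \<nu> Yg (Inr (l, i, True)))
        + \<mu> * ((Bmap m n ar N Ec \<mu> \<nu> X (Inr (l, i, False)) - dvec \<mu> \<nu> M f (Inr (l, i, False)))
              * Bmap m n ar N Ec \<mu> \<nu> Yg (Inr (l, i, False))))
      = \<nu>/2 * (\<Sum>i<p l. 2 * Re (cnj (Eapp Ec m ar n l l (P l) i + (\<Sum>j\<in>N l. q l j i) - f l i)
          * (Eapp Ec m ar n l l (Y l) i + (\<Sum>j\<in>N l. dq l j i))))"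
proof -
  have X_eq: "Eapp Ec m ar n l l (P l) i + (\<Sum>j\<in>N l. q l j i) = Eapp Ec m ar n l l X i + (\<Sum>j\<in>N l. Eapp Ec m ar n l j X i)"
    and Y_eq: "Eapp Ec m ar n l l (Y l) i + (\<Sum>j\<in>N l. dq l j i) = Eapp Ec m ar n l l Yg i + (\<Sum>j\<in>N l. Eapp Ec m ar n l j Yg i)"
    if "i < p l" for i
    using that local P q dq by (auto intro!: Eapp_block_local simp: Yg_def area_def)
  then show ?thesis
    unfolding sum_distrib_left Bmap_block_pairing[OF assms(5,6)]
    by (intro sum.cong refl) (simp add: X_eq Y_eq)
qed

lemma data_fit_derivative_eq_frob_Badj:
  fixes P Y :: "nat \<Rightarrow> nat \<Rightarrow> nat \<Rightarrow> real" and X :: "nat \<Rightarrow> nat \<Rightarrow> real"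
  assumes \<Omega>: "\<forall>l<nA. \<Omega> l \<subseteq> {..<m} \<times> area ar n l" and N: "\<forall>l<nA. N l \<subseteq> {..<nA}"
    and P: "\<forall>l<nA. \<forall>a<m. \<forall>b\<in>area ar n l. P l a b = X a b"
    and q: "\<forall>l<nA. \<forall>j\<in>N l. \<forall>i<p l. q l j i = Eapp Ec m ar n l j (P j) i"
    and dq: "\<forall>l<nA. \<forall>j\<in>N l. \<forall>i<p l. dq l j i = Eapp Ec m ar n l j (Y j) i"
    and "\<mu> > 0" "\<nu> > 0"
  shows "(\<Sum>l<nA. \<mu>/2 * (\<Sum>(a,b)\<in>\<Omega> l. 2 * (P l a b - M a b) * Y l a b)
       + \<nu>/2 * (\<Sum>i<p l. 2 * Re (cnj (Eapp Ec m ar n l l (P l) i + (\<Sum>j\<in>N l. q l j i) - f l i)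
          * (Eapp Ec m ar n l l (Y l) i + (\<Sum>j\<in>N l. dq l j i)))))
     = frob_inner m n (\<lambda>a b. \<mu> * Badj m n nA ar \<Omega> N Ec p \<mu> \<nu> (\<lambda>c. Bmap m n ar N Ec \<mu> \<nu> X c - dvec \<mu> \<nu> M f c) a b)
         (\<lambda>a b. Y (ar b) a b)"
proof -
  define \<rho> where "\<rho> c = Bmap m n ar N Ec \<mu> \<nu> X c - dvec \<mu> \<nu> M f c" for c
  define Yg where "Yg = (\<lambda>a b. Y (ar b) a b)"
  let ?Bm = "Bmap m n ar N Ec \<mu> \<nu>"
  have entries: "(\<Sum>x\<in>\<Omega> l. \<mu> * (\<rho> (Inl x) * ?Bm Yg (Inl x)))
      = \<mu>/2 * (\<Sum>(a,b)\<in>\<Omega> l. 2 * (P l a b - M a b) * Y l a b)" if "l < nA" for l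
  proof -
    have entry: "\<mu> * (\<rho> (Inl (a, b)) * ?Bm Yg (Inl (a, b))) = \<mu>/2 * (2 * (P l a b - M a b) * Y l a b)"
      if "(a, b) \<in> \<Omega> l" for a b
      using that \<Omega> P \<open>l < nA\<close> by (force simp: \<rho>_def Yg_def Bmap_def dvec_def area_def)
    show ?thesis
      unfolding sum_distrib_left
    proof (intro sum.cong refl)
      fix x assume "x \<in> \<Omega> l"
      then show "\<mu> * (\<rho> (Inl x) * ?Bm Yg (Inl x)) = \<mu>/2 * (case x of (a, b) \<Rightarrow> 2 * (P l a b - M a b) * Y l a b)"
        by (cases x) (simp only: prod.case entry)
    qed
  qed
  have blocks: "(\<Sum>i<p l. \<mu> * (\<rho> (Inr (l, i, True)) * ?Bm Yg (Inr (l, i, True)))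
        + \<mu> * (\<rho> (Inr (l, i, False)) * ?Bm Yg (Inr (l, i, False))))
      = \<nu>/2 * (\<Sum>i<p l. 2 * Re (cnj (Eapp Ec m ar n l l (P l) i + (\<Sum>j\<in>N l. q l j i) - f l i)
          * (Eapp Ec m ar n l l (Y l) i + (\<Sum>j\<in>N l. dq l j i))))" if "l < nA" for l
    unfolding \<rho>_def Yg_def using N that q dq
    by (intro block_fit_derivative_eq_Bmap[OF _ P _ _ assms(6,7)]) auto
  have "frob_inner m n (\<lambda>a b. \<mu> * Badj m n nA ar \<Omega> N Ec p \<mu> \<nu> \<rho> a b) Yg
      = (\<Sum>c\<in>Bidx nA \<Omega> p. \<mu> * (\<rho> c * ?Bm Yg c))"
    by (simp add: frob_inner_scale_left Badj_adjoint[OF \<Omega>] sum_distrib_left)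
  also have "\<dots> = (\<Sum>l<nA. \<Sum>x\<in>\<Omega> l. \<mu> * (\<rho> (Inl x) * ?Bm Yg (Inl x)))
      + (\<Sum>l<nA. \<Sum>i<p l. \<mu> * (\<rho> (Inr (l, i, True)) * ?Bm Yg (Inr (l, i, True)))
          + \<mu> * (\<rho> (Inr (l, i, False)) * ?Bm Yg (Inr (l, i, False))))"
    by (rule sum_Bidx[OF \<Omega>])
  also have "\<dots> = (\<Sum>l<nA. \<mu>/2 * (\<Sum>(a,b)\<in>\<Omega> l. 2 * (P l a b - M a b) * Y l a b)
       + \<nu>/2 * (\<Sum>i<p l. 2 * Re (cnj (Eapp Ec m ar n l l (P l) i + (\<Sum>j\<in>N l. q l j i) - f l i)
          * (Eapp Ec m ar n l l (Y l) i + (\<Sum>j\<in>N l. dq l j i)))))"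
    unfolding sum.distrib[symmetric] by (intro sum.cong refl) (simp only: lessThan_iff entries blocks)
  finally show ?thesis
    unfolding \<rho>_def Yg_def by (rule sym)
qed

lemma sum_lessThan_areas:
  assumes "\<forall>b<n. ar b < nA"
  shows "(\<Sum>b<n. g b) = (\<Sum>l<nA. \<Sum>b\<in>area ar n l. g b)"
proof -
  have "{..<n} = (\<Union>l<nA. area ar n l)" using assms unfolding area_def by auto
  then have "(\<Sum>b<n. g b) = (\<Sum>b\<in>(\<Union>l<nA. area ar n l). g b)" by simp
  also have "\<dots> = (\<Sum>l<nA. \<Sum>b\<in>area ar n l. g b)"
    by (rule sum.UNION_disjoint) (auto simp: finite_area area_def)
  finally show ?thesis .
qed

lemma feasible_consensus:
  assumes "nA \<ge> 1" and "area_graph_connected nA N" and "Pfeasible m n r nA ar N Ec p U V S q"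
  shows "\<forall>l<nA. \<forall>a<m. \<forall>k<r. U l a k = U 0 a k"
proof (intro allI impI)
  fix l a k assume "l < nA" "a < m" "k < r"
  then have "(0, l) \<in> {(x, y). x < nA \<and> y \<in> N x}\<^sup>*"
    using assms(1,2) unfolding area_graph_connected_def by auto
  then show "U l a k = U 0 a k"
  proof (induction rule: rtrancl_induct)
    case (step y z)
    then show ?case
      using assms(3) \<open>a < m\<close> \<open>k < r\<close> unfolding Pfeasible_def by auto
  qed simp
qed

lemma regularizer_derivative_consensus:
  assumes "\<forall>b<n. ar b < nA" and "nA \<ge> 1" and "\<forall>l<nA. \<forall>a<m. \<forall>k<r. U l a k = U0 a k"
  shows "(\<Sum>l<nA. (1/2) * ((1 / real nA) * (\<Sum>a<m. \<Sum>k<r. 2 * U l a k * W a k)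
            + (\<Sum>k<r. \<Sum>b\<in>area ar n l. 2 * V l k b * D k b)))
     = (\<Sum>a<m. \<Sum>k<r. U0 a k * W a k) + (\<Sum>k<r. \<Sum>b<n. V (ar b) k b * D k b)"
proof -
  have "(\<Sum>l<nA. (1 / real nA) * (\<Sum>a<m. \<Sum>k<r. U l a k * W a k))
      = (\<Sum>l<nA. (1 / real nA) * (\<Sum>a<m. \<Sum>k<r. U0 a k * W a k))"
    using assms(3) by (intro sum.cong refl) auto
  also have "\<dots> = (\<Sum>a<m. \<Sum>k<r. U0 a k * W a k)" using assms(2) by simp
  finally have U_part: "(\<Sum>l<nA. (1 / real nA) * (\<Sum>a<m. \<Sum>k<r. U l a k * W a k)) = (\<Sum>a<m. \<Sum>k<r. U0 a k * W a k)" .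
  have "(\<Sum>l<nA. \<Sum>k<r. \<Sum>b\<in>area ar n l. V l k b * D k b) = (\<Sum>k<r. \<Sum>l<nA. \<Sum>b\<in>area ar n l. V (ar b) k b * D k b)"
    by (subst sum.swap) (intro sum.cong refl, auto simp: area_def)
  also have "\<dots> = (\<Sum>k<r. \<Sum>b<n. V (ar b) k b * D k b)"
    by (rule sum.cong[OF refl]) (rule sum_lessThan_areas[OF assms(1), symmetric])
  finally have V_part: "(\<Sum>l<nA. \<Sum>k<r. \<Sum>b\<in>area ar n l. V l k b * D k b) = (\<Sum>k<r. \<Sum>b<n. V (ar b) k b * D k b)" .
  have per_area: "(1/2) * ((1 / real nA) * (\<Sum>a<m. \<Sum>k<r. 2 * U l a k * W a k)
            + (\<Sum>k<r. \<Sum>b\<in>area ar n l. 2 * V l k b * D k b))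
      = (1 / real nA) * (\<Sum>a<m. \<Sum>k<r. U l a k * W a k) + (\<Sum>k<r. \<Sum>b\<in>area ar n l. V l k b * D k b)" for l
    by (simp add: mult.assoc flip: sum_distrib_left)
  show ?thesis
    unfolding per_area sum.distrib U_part V_part ..
qed


text \<open>Moving every \<open>U\<^sub>l\<close> and \<open>S\<^sub>l\<^sub>j\<close> by the same \<open>W\<close> and every \<open>q\<^sub>l\<^sub>j\<close> along the induced
  change of \<open>E\<^sub>l\<^sub>j(U\<^sub>j V\<^sub>j)\<close> respects all constraints, so the multiplier terms drop out.\<close>
lemma Pstationary_consensus_direction:
  fixes W D :: "nat \<Rightarrow> nat \<Rightarrow> real"
  assumes "Pstationary m n r nA ar \<Omega> N Ec p f \<mu> \<nu> M U V S q"
  defines "dU \<equiv> \<lambda>_::nat. W" and "dV \<equiv> \<lambda>_::nat. D"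
  shows "(\<Sum>l<nA. (1/2) * ((1 / real nA) * (\<Sum>a<m. \<Sum>k<r. 2 * U l a k * W a k)
                + (\<Sum>k<r. \<Sum>b\<in>area ar n l. 2 * V l k b * D k b))
     + \<mu>/2 * (\<Sum>(a,b)\<in>\<Omega> l. 2 * (prodUV r U V l a b - M a b) * prodUV_deriv r U V dU dV l a b)
     + \<nu>/2 * (\<Sum>i<p l. 2 * Re (cnj (Eapp Ec m ar n l l (prodUV r U V l) i + (\<Sum>j\<in>N l. q l j i) - f l i)
        * (Eapp Ec m ar n l l (prodUV_deriv r U V dU dV l) i
           + (\<Sum>j\<in>N l. Eapp Ec m ar n l j (prodUV_deriv r U V dU dV j) i))))) = 0"
proof -
  define dq where "dq l j i = Eapp Ec m ar n l j (prodUV_deriv r U V dU dV j) i" for l j i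
  obtain Lam Gam Pm where "\<forall>dU dV dS dq.
       ((\<lambda>t. Plag m n r nA ar \<Omega> N Ec p f \<mu> \<nu> M
              (\<lambda>l a k. U l a k + t * dU l a k) (\<lambda>l k b. V l k b + t * dV l k b)
              (\<lambda>l j a k. S l j a k + t * dS l j a k) (\<lambda>l j i. q l j i + complex_of_real t * dq l j i)
              Lam Gam Pm) has_real_derivative 0) (at 0)"
    using assms(1) unfolding Pstationary_def by blast
  from DERIV_unique[OF Plag_line_DERIV this[rule_format, of dU dV "\<lambda>_ _. W" dq]]
  show ?thesis by (simp add: dU_def dV_def dq_def)
qed

lemma stationary_reduced_gradient:
  fixes U V :: "nat \<Rightarrow> nat \<Rightarrow> nat \<Rightarrow> real"
  assumes \<Omega>: "\<forall>l<nA. \<Omega> l \<subseteq> {..<m} \<times> area ar n l" and N: "\<forall>l<nA. N l \<subseteq> {..<nA}"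
    and "\<mu> > 0" "\<nu> > 0" and areas: "\<forall>b<n. ar b < nA" and "nA \<ge> 1"
    and stationary: "Pstationary m n r nA ar \<Omega> N Ec p f \<mu> \<nu> M U V S q"
    and consensus: "\<forall>l<nA. \<forall>a<m. \<forall>k<r. U l a k = U 0 a k"
  shows "factorization_stationary m n r
    (\<lambda>a b. \<mu> * Badj m n nA ar \<Omega> N Ec p \<mu> \<nu>
      (\<lambda>c. Bmap m n ar N Ec \<mu> \<nu> (\<lambda>a b. \<Sum>k<r. U 0 a k * V (ar b) k b) c - dvec \<mu> \<nu> M f c) a b)
    (U 0) (\<lambda>k b. V (ar b) k b)"
  unfolding factorization_stationary_def
proof (intro allI, goal_cases)
  case (1 W D)
  let ?dUV = "prodUV_deriv r U V (\<lambda>_. W) (\<lambda>_. D)"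
  \<comment> \<open>A separate name for \<open>U 0\<close> keeps the consensus equations from looping as rewrite rules.\<close>
  define U0 where "U0 = U 0"
  have U_eq: "\<forall>l<nA. \<forall>a<m. \<forall>k<r. U l a k = U0 a k"
    unfolding U0_def by (rule consensus)
  define Xb where "Xb = (\<lambda>a b. \<Sum>k<r. U0 a k * V (ar b) k b)"
  have q: "\<forall>l<nA. \<forall>j\<in>N l. \<forall>i<p l. q l j i = Eapp Ec m ar n l j (prodUV r U V j) i"
    using stationary unfolding Pstationary_def Pfeasible_def by metis
  have P: "\<forall>l<nA. \<forall>a<m. \<forall>b\<in>area ar n l. prodUV r U V l a b = Xb a b"
    using U_eq by (auto simp: prodUV_def Xb_def area_def)
  have "\<forall>a<m. \<forall>b<n. ?dUV (ar b) a b = (\<Sum>k<r. W a k * V (ar b) k b + U0 a k * D k b)"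
    using U_eq areas by (simp add: prodUV_deriv_def prodUV_def sum.distrib)
  then have "frob_inner m n G (\<lambda>a b. ?dUV (ar b) a b)
      = frob_inner m n G (\<lambda>a b. \<Sum>k<r. W a k * V (ar b) k b + U0 a k * D k b)" for G
    unfolding frob_inner_def by (intro sum.cong refl) auto
  then have data: "(\<Sum>l<nA. \<mu>/2 * (\<Sum>(a,b)\<in>\<Omega> l. 2 * (prodUV r U V l a b - M a b) * ?dUV l a b)
       + \<nu>/2 * (\<Sum>i<p l. 2 * Re (cnj (Eapp Ec m ar n l l (prodUV r U V l) i + (\<Sum>j\<in>N l. q l j i) - f l i)
          * (Eapp Ec m ar n l l (?dUV l) i + (\<Sum>j\<in>N l. Eapp Ec m ar n l j (?dUV j) i)))))
     = frob_inner m n (\<lambda>a b. \<mu> * Badj m n nA ar \<Omega> N Ec p \<mu> \<nu> (\<lambda>c. Bmap m n ar N Ec \<mu> \<nu> Xb c - dvec \<mu> \<nu> M f c) a b)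
         (\<lambda>a b. \<Sum>k<r. W a k * V (ar b) k b + U0 a k * D k b)"
    using data_fit_derivative_eq_frob_Badj[OF \<Omega> N P q _ assms(3,4),
        where dq = "\<lambda>l j i. Eapp Ec m ar n l j (?dUV j) i" and Y = ?dUV] by simp
  show ?case
    using Pstationary_consensus_direction[OF stationary, of W D]
      regularizer_derivative_consensus[OF areas assms(6) U_eq, of W V D] data
    unfolding sum.distrib Xb_def U0_def by linarith
qed

theorem theorem1:
  fixes m n r nA :: nat and \<mu> \<nu> :: real and M :: "nat \<Rightarrow> nat \<Rightarrow> real"
    and ar :: "nat \<Rightarrow> nat" and \<Omega> :: "nat \<Rightarrow> (nat \<times> nat) set" and N :: "nat \<Rightarrow> nat set"
    and p :: "nat \<Rightarrow> nat" and Ec :: "nat \<Rightarrow> nat \<Rightarrow> nat \<Rightarrow> nat \<Rightarrow> nat \<Rightarrow> complex"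
    and f :: "nat \<Rightarrow> nat \<Rightarrow> complex"
    and U :: "nat \<Rightarrow> nat \<Rightarrow> nat \<Rightarrow> real" and V :: "nat \<Rightarrow> nat \<Rightarrow> nat \<Rightarrow> real"
    and S :: "nat \<Rightarrow> nat \<Rightarrow> nat \<Rightarrow> nat \<Rightarrow> real" and q :: "nat \<Rightarrow> nat \<Rightarrow> nat \<Rightarrow> complex"
  assumes "m \<ge> 1" and "n \<ge> 1" and "r \<ge> 1" and "nA \<ge> 1" and "\<mu> > 0" and "\<nu> > 0"
    and "\<forall>b<n. ar b < nA"
    and "\<forall>l<nA. area ar n l \<noteq> {}"
    and "\<forall>l<nA. \<Omega> l \<subseteq> {..<m} \<times> area ar n l"
    and "\<forall>l<nA. N l \<subseteq> {..<nA} - {l}"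
    and "\<forall>l<nA. \<forall>j\<in>N l. l \<in> N j"
    and "area_graph_connected nA N"
    and "Pstationary m n r nA ar \<Omega> N Ec p f \<mu> \<nu> M U V S q"
  shows "(\<forall>l<nA. \<forall>a<m. \<forall>k<r. U l a k = U 0 a k) \<and>
    (let Xb = (\<lambda>a b. \<Sum>k<r. U 0 a k * V (ar b) k b) in
      spectral_norm m n
        (\<lambda>a b. \<mu> * Badj m n nA ar \<Omega> N Ec p \<mu> \<nu>
                   (\<lambda>c. Bmap m n ar N Ec \<mu> \<nu> Xb c - dvec \<mu> \<nu> M f c) a b) \<le> 1
      \<longrightarrow> (\<forall>X. NNobj m n nA ar \<Omega> N Ec p f \<mu> \<nu> M Xb \<le> NNobj m n nA ar \<Omega> N Ec p f \<mu> \<nu> M X))"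
proof -
  have consensus: "\<forall>l<nA. \<forall>a<m. \<forall>k<r. U l a k = U 0 a k"
    using feasible_consensus[OF assms(4,12)] assms(13) unfolding Pstationary_def by blast
  have N: "\<forall>l<nA. N l \<subseteq> {..<nA}" using assms(10) by blast
  have "nuclear_norm m n (\<lambda>a b. \<Sum>k<r. U 0 a k * V (ar b) k b)
      \<le> - frob_inner m n
            (\<lambda>a b. \<mu> * Badj m n nA ar \<Omega> N Ec p \<mu> \<nu>
              (\<lambda>c. Bmap m n ar N Ec \<mu> \<nu> (\<lambda>a b. \<Sum>k<r. U 0 a k * V (ar b) k b) c - dvec \<mu> \<nu> M f c) a b)
            (\<lambda>a b. \<Sum>k<r. U 0 a k * V (ar b) k b)"
    using stationary_reduced_gradient[OF assms(9) N assms(5,6,7,4,13) consensus]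
    by (rule nuclear_norm_le_of_factorization_stationary)
  then show ?thesis
    using consensus NNobj_minimal_of_certificate[OF assms(9,5) refl] unfolding Let_def by blast
qed

end
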